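(* Let $\mathbb D$ be a nonempty set of database instances over the same schema. (1) If $\mathbb D$ has bounded instance size, then $\mathcal D\in\mathsf{FO}(\mathsf{TI})$ for every probabilistic database $\mathcal D$ with $\mathrm{worlds}(\mathcal D)=\mathbb D$. (2) If $\mathbb D$ has unbounded instance size, then there exist probabilistic databases $\mathcal D_1\in\mathsf{FO}(\mathsf{TI})$ and $\mathcal D_2\notin\mathsf{FO}(\mathsf{TI})$ such that $\mathrm{worlds}(\mathcal D_1)=\mathrm{worlds}(\mathcal D_2)=\mathbb D$.
   Context: Fix a countably infinite universe $U$. A database schema is a finite nonempty set of relation symbols with arities; facts are $R(u_1,\dots,u_{\mathrm{ar}(R)})$ with $u_i\in U$; an instance is a finite set of facts ($|D|$ = number of facts); $\mathrm{adom}(D)$ is the set of elements of $U$ occurring in $D$. A probabilistic database (PDB) is a discrete probability space $(\mathbb D,P)$ with $\mathbb D$ a nonempty countable set of instances over a schema; $\mathrm{worlds}(\mathcal D)$ is the set of instances $D$ with $P(\{D\})>0$. A set of instances has bounded instance size if there is $c$ with $|D|\le c$ for all its members, and unbounded instance size otherwise. A PDB $\mathcal I$ is tuple-independent if for all pairwise distinct facts $f_1,\dots,f_k$, $\Pr_{I\sim\mathcal I}(f_1\in I,\dots,f_k\in I)=\prod_i\Pr_{I\sim\mathcal I}(f_i\in I)$. An FO-view consists of one first-order formula $\Phi_R(x_1,\dots,x_{\mathrm{ar}(R)})$ per output relation symbol $R$, evaluated under active domain semantics (quantifiers range over $\mathrm{adom}(D)$ and the formula's constants), mapping $D$ to the instance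 containing $R(\bar a)$ for all tuples $\bar a$ over $\mathrm{adom}(D)\cup\mathrm{adom}(\Phi_R)$ with $D\models\Phi_R[\bar a]$. The image of a PDB $(\mathbb D,P)$ under a view $V$ is the PDB on $V(\mathbb D)$ with $P'(\{D'\})=P(\{D:V(D)=D'\})$. $\mathsf{FO}(\mathsf{TI})$ is the class of images of tuple-independent PDBs under FO-views. *)

theory Defs
  imports "HOL-Probability.Probability"
begin

(* A relation symbol is identified by a name together with its arity. *)
type_synonym rel = "nat \<times> nat"

definition arity :: "rel \<Rightarrow> nat" where
  "arity R = snd R"

type_synonym 'u fact = "rel \<times> 'u list"

type_synonym 'u inst = "'u fact set"

definition schema :: "rel set \<Rightarrow> bool" where
  "schema S \<longleftrightarrow> finite S \<and> S \<noteq> {}"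

definition instance_over :: "rel set \<Rightarrow> 'u inst \<Rightarrow> bool" where
  "instance_over S D \<longleftrightarrow> finite D \<and> (\<forall>(R, as) \<in> D. R \<in> S \<and> length as = arity R)"

definition adom :: "'u inst \<Rightarrow> 'u set" where
  "adom D = (\<Union>(R, as) \<in> D. set as)"

definition bounded_instance_size :: "'u inst set \<Rightarrow> bool" where
  "bounded_instance_size DD \<longleftrightarrow> (\<exists>c::nat. \<forall>D \<in> DD. card D \<le> c)"

definition pdb :: "rel set \<Rightarrow> 'u inst pmf \<Rightarrow> bool" where
  "pdb S P \<longleftrightarrow> schema S \<and> (\<forall>D \<in> set_pmf P. instance_over S D)"

definition worlds :: "'u inst pmf \<Rightarrow> 'u inst set" where
  "worlds P = set_pmf P"

definition tuple_independent :: "'u inst pmf \<Rightarrow> bool" where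
  "tuple_independent P \<longleftrightarrow>
     (\<forall>F :: 'u fact set. finite F \<longrightarrow>
        measure_pmf.prob P {I. F \<subseteq> I} = (\<Prod>f\<in>F. measure_pmf.prob P {I. f \<in> I}))"

datatype 'u trm = Var nat | Const 'u

datatype 'u fo =
    FTrue | FFalse
  | Atom rel "'u trm list"
  | FEq "'u trm" "'u trm"
  | Neg "'u fo"
  | Conj "'u fo" "'u fo"
  | Disj "'u fo" "'u fo"
  | Impl "'u fo" "'u fo"
  | FEx nat "'u fo"
  | FAll nat "'u fo"

fun trm_consts :: "'u trm \<Rightarrow> 'u set" where
  "trm_consts (Var _) = {}"
| "trm_consts (Const c) = {c}"

fun trm_vars :: "'u trm \<Rightarrow> nat set" where
  "trm_vars (Var x) = {x}"
| "trm_vars (Const _) = {}"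

fun fo_consts :: "'u fo \<Rightarrow> 'u set" where
  "fo_consts FTrue = {}"
| "fo_consts FFalse = {}"
| "fo_consts (Atom R ts) = (\<Union>t \<in> set ts. trm_consts t)"
| "fo_consts (FEq s t) = trm_consts s \<union> trm_consts t"
| "fo_consts (Neg \<phi>) = fo_consts \<phi>"
| "fo_consts (Conj \<phi> \<psi>) = fo_consts \<phi> \<union> fo_consts \<psi>"
| "fo_consts (Disj \<phi> \<psi>) = fo_consts \<phi> \<union> fo_consts \<psi>"
| "fo_consts (Impl \<phi> \<psi>) = fo_consts \<phi> \<union> fo_consts \<psi>"
| "fo_consts (FEx x \<phi>) = fo_consts \<phi>"
| "fo_consts (FAll x \<phi>) = fo_consts \<phi>"

fun fv :: "'u fo \<Rightarrow> nat set" where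
  "fv FTrue = {}"
| "fv FFalse = {}"
| "fv (Atom R ts) = (\<Union>t \<in> set ts. trm_vars t)"
| "fv (FEq s t) = trm_vars s \<union> trm_vars t"
| "fv (Neg \<phi>) = fv \<phi>"
| "fv (Conj \<phi> \<psi>) = fv \<phi> \<union> fv \<psi>"
| "fv (Disj \<phi> \<psi>) = fv \<phi> \<union> fv \<psi>"
| "fv (Impl \<phi> \<psi>) = fv \<phi> \<union> fv \<psi>"
| "fv (FEx x \<phi>) = fv \<phi> - {x}"
| "fv (FAll x \<phi>) = fv \<phi> - {x}"

fun rels :: "'u fo \<Rightarrow> rel set" where
  "rels FTrue = {}"
| "rels FFalse = {}"
| "rels (Atom R ts) = {R}"
| "rels (FEq s t) = {}"
| "rels (Neg \<phi>) = rels \<phi>"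
| "rels (Conj \<phi> \<psi>) = rels \<phi> \<union> rels \<psi>"
| "rels (Disj \<phi> \<psi>) = rels \<phi> \<union> rels \<psi>"
| "rels (Impl \<phi> \<psi>) = rels \<phi> \<union> rels \<psi>"
| "rels (FEx x \<phi>) = rels \<phi>"
| "rels (FAll x \<phi>) = rels \<phi>"

fun eval_trm :: "(nat \<Rightarrow> 'u) \<Rightarrow> 'u trm \<Rightarrow> 'u" where
  "eval_trm \<sigma> (Var x) = \<sigma> x"
| "eval_trm \<sigma> (Const c) = c"

fun sat :: "'u inst \<Rightarrow> 'u set \<Rightarrow> (nat \<Rightarrow> 'u) \<Rightarrow> 'u fo \<Rightarrow> bool" where
  "sat D A \<sigma> FTrue = True"
| "sat D A \<sigma> FFalse = False"
| "sat D A \<sigma> (Atom R ts) = ((R, map (eval_trm \<sigma>) ts) \<in> D)"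
| "sat D A \<sigma> (FEq s t) = (eval_trm \<sigma> s = eval_trm \<sigma> t)"
| "sat D A \<sigma> (Neg \<phi>) = (\<not> sat D A \<sigma> \<phi>)"
| "sat D A \<sigma> (Conj \<phi> \<psi>) = (sat D A \<sigma> \<phi> \<and> sat D A \<sigma> \<psi>)"
| "sat D A \<sigma> (Disj \<phi> \<psi>) = (sat D A \<sigma> \<phi> \<or> sat D A \<sigma> \<psi>)"
| "sat D A \<sigma> (Impl \<phi> \<psi>) = (sat D A \<sigma> \<phi> \<longrightarrow> sat D A \<sigma> \<psi>)"
| "sat D A \<sigma> (FEx x \<phi>) = (\<exists>a \<in> A. sat D A (\<sigma>(x := a)) \<phi>)"
| "sat D A \<sigma> (FAll x \<phi>) = (\<forall>a \<in> A. sat D A (\<sigma>(x := a)) \<phi>)"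

definition sat_adom :: "'u inst \<Rightarrow> 'u fo \<Rightarrow> 'u list \<Rightarrow> bool" where
  "sat_adom D \<phi> as = sat D (adom D \<union> fo_consts \<phi>) (\<lambda>i. as ! i) \<phi>"

definition fo_view :: "rel set \<Rightarrow> rel set \<Rightarrow> (rel \<Rightarrow> 'u fo) \<Rightarrow> bool" where
  "fo_view Sin Sout \<Phi> \<longleftrightarrow> schema Sin \<and> schema Sout \<and>
     (\<forall>R \<in> Sout. fv (\<Phi> R) \<subseteq> {..<arity R} \<and> rels (\<Phi> R) \<subseteq> Sin)"

definition view_apply :: "rel set \<Rightarrow> (rel \<Rightarrow> 'u fo) \<Rightarrow> 'u inst \<Rightarrow> 'u inst" where
  "view_apply Sout \<Phi> D =
     {(R, as) | R as. R \<in> Sout \<and> length as = arity R \<and>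
        set as \<subseteq> adom D \<union> fo_consts (\<Phi> R) \<and> sat_adom D (\<Phi> R) as}"

definition in_FO_TI :: "rel set \<Rightarrow> 'u inst pmf \<Rightarrow> bool" where
  "in_FO_TI S P \<longleftrightarrow>
     (\<exists>Sin (I :: 'u inst pmf) \<Phi>. pdb Sin I \<and> tuple_independent I \<and> fo_view Sin S \<Phi> \<and>
        P = map_pmf (view_apply S \<Phi>) I)"

end

theory Submission
  imports Defs
begin

text \<open>Fix an enumeration of the worlds other than a default world. A tuple-independent PDB over a
  countable set of facts is realised as an infinite product of independent coins with summable
  odds. If the worlds have bounded size, each is written as a single tuple, and the view outputs
  the world in the highest of \<open>m\<close> independent layers that holds exactly one such tuple, unless a
  switch fact is present; with odds proportional to the target probabilities and suitable \<open>m\<close> and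
  switch probability this reproduces any given PDB exactly. For unbounded sizes, writing each world
  as a key-tagged cycle of facts still yields an FO(TI) PDB with the prescribed worlds. On the other
  hand an FO-view enlarges instances at most polynomially, and a tuple-independent PDB satisfies
  \<open>P(|I| \<ge> t) = O(1/t)\<close>; so a PDB that puts mass \<open>2^-(n+2)\<close> on a world of size at least
  \<open>(n 2^(n+3))^n\<close>, for every \<open>n\<close>, is not in FO(TI).\<close>

section \<open>Random sets with independent elements\<close>

definition indep_elems :: "'a set pmf \<Rightarrow> bool" where
  "indep_elems P \<longleftrightarrow> (\<forall>F. finite F \<longrightarrow>
      measure_pmf.prob P {X. F \<subseteq> X} = (\<Prod>f\<in>F. measure_pmf.prob P {X. f \<in> X}))"

lemma tuple_independent_iff_indep_elems: "tuple_independent P \<longleftrightarrow> indep_elems P"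
  unfolding tuple_independent_def indep_elems_def ..

lemma measure_pmf_prob_cong:
  assumes "\<And>x. x \<in> set_pmf P \<Longrightarrow> x \<in> A \<longleftrightarrow> x \<in> B"
  shows "measure_pmf.prob P A = measure_pmf.prob P B"
proof -
  have "A \<inter> set_pmf P = B \<inter> set_pmf P" using assms by blast
  then show ?thesis by (metis measure_Int_set_pmf)
qed

lemma pmf_eqI_except:
  fixes p q :: "'a pmf"
  assumes "\<And>x. x \<noteq> x0 \<Longrightarrow> pmf p x = pmf q x"
  shows "p = q"
proof (rule pmf_eqI)
  have "measure_pmf.prob p (UNIV - {x0}) = measure_pmf.prob q (UNIV - {x0})"
    unfolding measure_pmf_conv_infsetsum by (rule infsetsum_cong) (use assms in auto)
  then have "pmf p x0 = pmf q x0"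
    using measure_pmf.prob_compl[of "{x0}" p] measure_pmf.prob_compl[of "{x0}" q]
    by (simp add: measure_pmf_single)
  then show "pmf p x = pmf q x" for x using assms by (cases "x = x0") auto
qed

lemma prob_pair_pmf_Times:
  "measure_pmf.prob (pair_pmf A B) {(X, Y). X \<in> SA \<and> Y \<in> SB} =
     measure_pmf.prob A SA * measure_pmf.prob B SB"
proof -
  have "measure_pmf.prob (pair_pmf A B) {(X, Y). X \<in> SA \<and> Y \<in> SB} =
        measure_pmf.prob (pair_pmf A B) ((SA \<inter> set_pmf A) \<times> (SB \<inter> set_pmf B))"
    by (rule measure_pmf_prob_cong) auto
  also have "\<dots> = measure_pmf.prob A (SA \<inter> set_pmf A) * measure_pmf.prob B (SB \<inter> set_pmf B)"
    by (rule measure_pmf_prob_product) (auto intro: countable_subset[OF _ countable_set_pmf])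
  finally show ?thesis by (simp add: measure_Int_set_pmf)
qed

lemma prob_superset_absent:
  assumes "finite F" "f \<in> F" "\<And>X. X \<in> set_pmf P \<Longrightarrow> f \<notin> X"
  shows "measure_pmf.prob P {X. F \<subseteq> X} = (\<Prod>f\<in>F. measure_pmf.prob P {X. f \<in> X})"
proof -
  have "measure_pmf.prob P {X. f \<in> X} = 0" "measure_pmf.prob P {X. F \<subseteq> X} = 0"
    using assms(2,3) by (auto simp: measure_pmf_zero_iff)
  then show ?thesis using assms(1,2) by (metis (no_types, lifting) prod_zero_iff)
qed

lemma indep_elems_subsingleton:
  assumes "\<And>X. X \<in> set_pmf P \<Longrightarrow> X \<subseteq> {a}"
  shows "indep_elems P"
  unfolding indep_elems_def
proof (intro allI impI)
  fix F :: "'a set" assume "finite F"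
  show "measure_pmf.prob P {X. F \<subseteq> X} = (\<Prod>f\<in>F. measure_pmf.prob P {X. f \<in> X})"
  proof (cases "F \<subseteq> {a}")
    case True
    then consider "F = {}" | "F = {a}" by blast
    then show ?thesis by cases auto
  next
    case False
    then obtain f where "f \<in> F" "f \<noteq> a" by auto
    with \<open>finite F\<close> show ?thesis by (intro prob_superset_absent) (use assms in blast)+
  qed
qed

lemma indep_elems_image:
  assumes indep: "indep_elems P" and supp: "\<And>X. X \<in> set_pmf P \<Longrightarrow> X \<subseteq> U" and inj: "inj_on h U"
  shows "indep_elems (map_pmf ((`) h) P)"
  unfolding indep_elems_def
proof (intro allI impI)
  fix F :: "'b set" assume fin: "finite F"
  have image_prob: "measure_pmf.prob (map_pmf ((`) h) P) {Y. G \<subseteq> Y} = measure_pmf.prob P {X. G \<subseteq> h ` X}" for G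
    by (simp add: vimage_def)
  show "measure_pmf.prob (map_pmf ((`) h) P) {Y. F \<subseteq> Y} =
        (\<Prod>f\<in>F. measure_pmf.prob (map_pmf ((`) h) P) {Y. f \<in> Y})"
  proof (cases "F \<subseteq> h ` U")
    case True
    define F' where "F' = U \<inter> h -` F"
    have hF': "h ` F' = F" using True by (auto simp: F'_def)
    have inj': "inj_on h F'" using inj by (rule inj_on_subset) (simp add: F'_def)
    have finF': "finite F'" using fin hF' inj' finite_image_iff by metis
    have preimage: "G \<subseteq> h ` X \<longleftrightarrow> U \<inter> h -` G \<subseteq> X" if "X \<in> set_pmf P" "G \<subseteq> h ` U" for X G
    proof
      assume "G \<subseteq> h ` X"
      then show "U \<inter> h -` G \<subseteq> X" using supp[OF that(1)] inj by (fastforce dest: inj_onD)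
    qed (use that(2) in blast)
    have "measure_pmf.prob P {X. F \<subseteq> h ` X} = measure_pmf.prob P {X. F' \<subseteq> X}"
      by (rule measure_pmf_prob_cong) (use preimage True in \<open>auto simp: F'_def\<close>)
    also have "\<dots> = (\<Prod>f\<in>F'. measure_pmf.prob P {X. f \<in> X})"
      using indep finF' unfolding indep_elems_def by blast
    also have "\<dots> = (\<Prod>f\<in>F'. measure_pmf.prob P {X. {h f} \<subseteq> h ` X})"
    proof (rule prod.cong[OF refl], rule measure_pmf_prob_cong)
      fix f X assume "f \<in> F'" "X \<in> set_pmf P"
      moreover have "U \<inter> h -` {h f} = {f}" if "f \<in> U" using that inj by (auto dest: inj_onD)
      ultimately show "X \<in> {X. f \<in> X} \<longleftrightarrow> X \<in> {X. {h f} \<subseteq> h ` X}"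
        using preimage[of X "{h f}"] by (auto simp: F'_def)
    qed
    also have "\<dots> = (\<Prod>f\<in>F. measure_pmf.prob P {X. f \<in> h ` X})"
      using prod.reindex[OF inj', of "\<lambda>f. measure_pmf.prob P {X. f \<in> h ` X}"] hF' by simp
    finally show ?thesis using image_prob[of F] image_prob[of "{_}"] by simp
  next
    case False
    then obtain f where "f \<in> F" "f \<notin> h ` U" by auto
    with fin show ?thesis by (intro prob_superset_absent) (use supp in auto)
  qed
qed

definition union_pmf :: "'a set pmf \<Rightarrow> 'a set pmf \<Rightarrow> 'a set pmf" where
  "union_pmf A B = map_pmf (\<lambda>(X, Y). X \<union> Y) (pair_pmf A B)"

lemma set_pmf_union_pmf: "set_pmf (union_pmf A B) = {X \<union> Y |X Y. X \<in> set_pmf A \<and> Y \<in> set_pmf B}"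
  unfolding union_pmf_def by auto

lemma prob_union_pmf_superset:
  assumes suppA: "\<And>X. X \<in> set_pmf A \<Longrightarrow> X \<subseteq> UA" and suppB: "\<And>Y. Y \<in> set_pmf B \<Longrightarrow> Y \<subseteq> UB"
    and disj: "UA \<inter> UB = {}" and FU: "F \<subseteq> UA \<union> UB"
  shows "measure_pmf.prob (union_pmf A B) {Z. F \<subseteq> Z} =
      measure_pmf.prob A {X. F \<inter> UA \<subseteq> X} * measure_pmf.prob B {Y. F \<inter> UB \<subseteq> Y}"
proof -
  have "measure_pmf.prob (union_pmf A B) {Z. F \<subseteq> Z} =
      measure_pmf.prob (pair_pmf A B) {(X, Y). F \<subseteq> X \<union> Y}"
    unfolding union_pmf_def measure_map_pmf by (intro arg_cong[where f="measure_pmf.prob _"]) auto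
  also have "\<dots> = measure_pmf.prob (pair_pmf A B)
      {(X, Y). X \<in> {X. F \<inter> UA \<subseteq> X} \<and> Y \<in> {Y. F \<inter> UB \<subseteq> Y}}"
  proof (rule measure_pmf_prob_cong)
    fix z assume "z \<in> set_pmf (pair_pmf A B)"
    then obtain X Y where "z = (X, Y)" "X \<subseteq> UA" "Y \<subseteq> UB" using suppA suppB by auto
    then show "z \<in> {(X, Y). F \<subseteq> X \<union> Y} \<longleftrightarrow>
        z \<in> {(X, Y). X \<in> {X. F \<inter> UA \<subseteq> X} \<and> Y \<in> {Y. F \<inter> UB \<subseteq> Y}}"
      using disj FU by auto
  qed
  finally show ?thesis by (simp only: prob_pair_pmf_Times)
qed

lemma indep_elems_union_pmf:
  assumes indepA: "indep_elems A" and indepB: "indep_elems B"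
    and suppA: "\<And>X. X \<in> set_pmf A \<Longrightarrow> X \<subseteq> UA" and suppB: "\<And>Y. Y \<in> set_pmf B \<Longrightarrow> Y \<subseteq> UB"
    and disj: "UA \<inter> UB = {}"
  shows "indep_elems (union_pmf A B)"
  unfolding indep_elems_def
proof (intro allI impI)
  fix F :: "'a set" assume fin: "finite F"
  let ?pr = "\<lambda>G. measure_pmf.prob (union_pmf A B) {Z. G \<subseteq> Z}"
  have margA: "?pr {f} = measure_pmf.prob A {X. f \<in> X}" if "f \<in> UA" for f
  proof -
    have "{f} \<inter> UA = {f}" "{f} \<inter> UB = {}" using that disj by auto
    then show ?thesis using prob_union_pmf_superset[of A UA B UB "{f}"] suppA suppB that disj by simp
  qed
  have margB: "?pr {f} = measure_pmf.prob B {Y. f \<in> Y}" if "f \<in> UB" for f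
  proof -
    have "{f} \<inter> UA = {}" "{f} \<inter> UB = {f}" using that disj by auto
    then show ?thesis using prob_union_pmf_superset[of A UA B UB "{f}"] suppA suppB that disj by simp
  qed
  show "?pr F = (\<Prod>f\<in>F. measure_pmf.prob (union_pmf A B) {Z. f \<in> Z})"
  proof (cases "F \<subseteq> UA \<union> UB")
    case True
    have "?pr F = measure_pmf.prob A {X. F \<inter> UA \<subseteq> X} * measure_pmf.prob B {Y. F \<inter> UB \<subseteq> Y}"
      by (rule prob_union_pmf_superset[of A UA B UB F]) (use suppA suppB disj True in auto)
    also have "\<dots> = (\<Prod>f\<in>F \<inter> UA. measure_pmf.prob A {X. f \<in> X}) *
        (\<Prod>f\<in>F \<inter> UB. measure_pmf.prob B {Y. f \<in> Y})"
      using indepA indepB fin unfolding indep_elems_def by simp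
    also have "\<dots> = (\<Prod>f\<in>F \<inter> UA. ?pr {f}) * (\<Prod>f\<in>F \<inter> UB. ?pr {f})"
      using margA margB by simp
    also have "\<dots> = (\<Prod>f\<in>(F \<inter> UA) \<union> (F \<inter> UB). ?pr {f})"
      by (rule prod.union_disjoint[symmetric]) (use fin disj in auto)
    also have "(F \<inter> UA) \<union> (F \<inter> UB) = F" using True by auto
    finally show ?thesis by simp
  next
    case False
    then obtain f where "f \<in> F" "f \<notin> UA \<union> UB" by auto
    with fin show ?thesis
      by (intro prob_superset_absent) (use suppA suppB in \<open>auto simp: set_pmf_union_pmf\<close>)
  qed
qed

definition bernoulli_set :: "('a \<Rightarrow> real) \<Rightarrow> 'a set \<Rightarrow> 'a set pmf" where
  "bernoulli_set p A = map_pmf (\<lambda>b. {x \<in> A. b x}) (Pi_pmf A False (\<lambda>x. bernoulli_pmf (p x)))"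

lemma set_pmf_bernoulli_set: "X \<in> set_pmf (bernoulli_set p A) \<Longrightarrow> X \<subseteq> A"
  by (auto simp: bernoulli_set_def)

lemma prob_bernoulli_set_superset:
  assumes "finite A" "F \<subseteq> A" and p: "\<And>x. x \<in> A \<Longrightarrow> 0 \<le> p x \<and> p x \<le> 1"
  shows "measure_pmf.prob (bernoulli_set p A) {X. F \<subseteq> X} = (\<Prod>x\<in>F. p x)"
proof -
  let ?B = "\<lambda>x. if x \<in> F then {True} else UNIV"
  have "measure_pmf.prob (bernoulli_set p A) {X. F \<subseteq> X} =
      measure_pmf.prob (Pi_pmf A False (\<lambda>x. bernoulli_pmf (p x))) (Pi A ?B)"
    unfolding bernoulli_set_def measure_map_pmf
    using assms(2) by (intro arg_cong[where f="measure_pmf.prob _"]) (auto simp: Pi_def)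
  also have "\<dots> = (\<Prod>x\<in>A. measure_pmf.prob (bernoulli_pmf (p x)) (?B x))"
    by (rule measure_Pi_pmf_Pi[OF assms(1)])
  also have "\<dots> = (\<Prod>x\<in>A. if x \<in> F then p x else 1)"
    using p by (intro prod.cong) (auto simp: measure_pmf_single pmf_bernoulli_True)
  also have "\<dots> = (\<Prod>x\<in>F. p x)"
    using assms(1,2) by (simp add: prod.If_cases Int_absorb1)
  finally show ?thesis .
qed

lemma pmf_bernoulli_set:
  assumes "finite A" "Y \<subseteq> A" and p: "\<And>x. x \<in> A \<Longrightarrow> 0 \<le> p x \<and> p x \<le> 1"
  shows "pmf (bernoulli_set p A) Y = (\<Prod>x\<in>Y. p x) * (\<Prod>x\<in>A - Y. 1 - p x)"
proof -
  have "pmf (bernoulli_set p A) Y =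
      measure_pmf.prob (Pi_pmf A False (\<lambda>x. bernoulli_pmf (p x))) (Pi A (\<lambda>x. {x \<in> Y}))"
    unfolding bernoulli_set_def pmf_map
    using assms(2) by (intro arg_cong[where f="measure_pmf.prob _"]) (auto simp: Pi_def)
  also have "\<dots> = (\<Prod>x\<in>A. measure_pmf.prob (bernoulli_pmf (p x)) {x \<in> Y})"
    by (rule measure_Pi_pmf_Pi[OF assms(1)])
  also have "\<dots> = (\<Prod>x\<in>A. if x \<in> Y then p x else 1 - p x)"
    using p by (intro prod.cong) (auto simp: measure_pmf_single pmf_bernoulli_True pmf_bernoulli_False)
  also have "\<dots> = (\<Prod>x\<in>Y. p x) * (\<Prod>x\<in>A - Y. 1 - p x)"
    using assms(1,2) by (simp add: prod.If_cases Int_absorb1 Diff_eq)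
  finally show ?thesis .
qed

section \<open>A random finite set with prescribed odds\<close>

text \<open>For summable odds \<open>q \<ge> 0\<close>, \<open>odds_set q\<close> is the random finite set of naturals that contains
  each \<open>n\<close> independently with probability \<open>q n / (1 + q n)\<close>. It is assembled from its height
  \<open>N = Suc (Max X)\<close> (and \<open>N = 0\<close> for \<open>X = {}\<close>): \<open>P(N \<le> n)\<close> is the tail product
  \<open>odds_tail q n = \<Prod>j\<ge>n. 1 / (1 + q j)\<close>, and given \<open>N = Suc n\<close> the element \<open>n\<close> is present
  while the smaller elements are independent coin flips.\<close>

definition odds_prob :: "(nat \<Rightarrow> real) \<Rightarrow> nat \<Rightarrow> real" where
  "odds_prob q n = q n / (1 + q n)"

definition odds_tail :: "(nat \<Rightarrow> real) \<Rightarrow> nat \<Rightarrow> real" where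
  "odds_tail q n = exp (- (\<Sum>j. ln (1 + q (j + n))))"

definition height_weight :: "(nat \<Rightarrow> real) \<Rightarrow> nat \<Rightarrow> real" where
  "height_weight q N = (case N of 0 \<Rightarrow> odds_tail q 0 | Suc m \<Rightarrow> odds_tail q (Suc m) - odds_tail q m)"

definition height_pmf :: "(nat \<Rightarrow> real) \<Rightarrow> nat pmf" where
  "height_pmf q = embed_pmf (height_weight q)"

definition odds_set_of_height :: "(nat \<Rightarrow> real) \<Rightarrow> nat \<Rightarrow> nat set pmf" where
  "odds_set_of_height q N = (case N of 0 \<Rightarrow> return_pmf {}
     | Suc n \<Rightarrow> map_pmf (insert n) (bernoulli_set (odds_prob q) {..<n}))"

definition odds_set :: "(nat \<Rightarrow> real) \<Rightarrow> nat set pmf" where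
  "odds_set q = bind_pmf (height_pmf q) (odds_set_of_height q)"

locale summable_odds =
  fixes q :: "nat \<Rightarrow> real"
  assumes odds_nonneg: "\<And>n. 0 \<le> q n" and odds_summable: "summable q"
begin

lemma summable_ln_odds: "summable (\<lambda>n. ln (1 + q n))"
proof (rule summable_comparison_test'[OF odds_summable])
  show "norm (ln (1 + q n)) \<le> q n" for n
    using odds_nonneg[of n] ln_add_one_self_le_self[OF odds_nonneg[of n]] by simp
qed

lemma odds_tail_Suc: "odds_tail q (Suc n) = odds_tail q n * (1 + q n)"
proof -
  have "summable (\<lambda>j. ln (1 + q (j + n)))"
    using summable_ln_odds summable_iff_shift[where f="\<lambda>j. ln (1 + q j)"] by blast
  from suminf_split_head[OF this]
  have "(\<Sum>j. ln (1 + q (j + n))) = ln (1 + q n) + (\<Sum>j. ln (1 + q (j + Suc n)))" by simp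
  then have "odds_tail q n * (1 + q n) = odds_tail q (Suc n) * (exp (- ln (1 + q n)) * (1 + q n))"
    unfolding odds_tail_def by (simp add: exp_add[symmetric])
  also have "exp (- ln (1 + q n)) * (1 + q n) = 1"
    using odds_nonneg[of n] by (simp add: exp_minus)
  finally show ?thesis by simp
qed

lemma odds_tail_pos: "0 < odds_tail q n"
  unfolding odds_tail_def by simp

lemma odds_tail_le_1: "odds_tail q n \<le> 1"
proof -
  have "0 \<le> (\<Sum>j. ln (1 + q (j + n)))"
    using summable_ln_odds summable_iff_shift[where f="\<lambda>j. ln (1 + q j)"] odds_nonneg
    by (intro suminf_nonneg) auto
  then show ?thesis unfolding odds_tail_def by simp
qed

lemma odds_tail_LIMSEQ: "(\<lambda>n. odds_tail q n) \<longlonglongrightarrow> 1"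
proof -
  have "(\<lambda>n. \<Sum>j. ln (1 + q (j + n))) \<longlonglongrightarrow> 0"
    by (rule suminf_exist_split2[OF summable_ln_odds])
  then have "(\<lambda>n. exp (- (\<Sum>j. ln (1 + q (j + n))))) \<longlonglongrightarrow> exp (- 0)"
    by (intro tendsto_intros)
  then show ?thesis unfolding odds_tail_def by simp
qed

lemma odds_prob_bounds: "0 \<le> odds_prob q n" "odds_prob q n \<le> 1"
  using odds_nonneg[of n] by (auto simp: odds_prob_def)

lemma odds_prob_less_1: "odds_prob q n < 1"
  using odds_nonneg[of n] by (simp add: odds_prob_def)

lemma odds_tail_0: "odds_tail q 0 = odds_tail q n * (\<Prod>j<n. 1 - odds_prob q j)"
proof (induction n)
  case (Suc n)
  have "odds_tail q n = odds_tail q (Suc n) * (1 - odds_prob q n)"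
    unfolding odds_tail_Suc using odds_nonneg[of n] by (simp add: odds_prob_def field_simps)
  then show ?case using Suc by (simp add: mult.assoc)
qed simp

lemma height_weight_Suc: "height_weight q (Suc n) = odds_tail q n * q n"
  using odds_tail_Suc[of n] by (simp add: height_weight_def algebra_simps)

lemma height_weight_Suc': "height_weight q (Suc n) = odds_tail q (Suc n) * odds_prob q n"
  using odds_tail_Suc[of n] odds_nonneg[of n] by (simp add: height_weight_def odds_prob_def field_simps)

lemma height_weight_nonneg: "0 \<le> height_weight q N"
proof (cases N)
  case 0 then show ?thesis using odds_tail_pos[of 0] by (simp add: height_weight_def)
next
  case (Suc m) then show ?thesis using odds_tail_pos[of m] odds_nonneg[of m] by (simp add: height_weight_Suc)
qed

lemma sum_height_weight: "(\<Sum>i<Suc n. height_weight q i) = odds_tail q n"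
  by (induction n) (auto simp: height_weight_def)

lemma pmf_height_pmf: "pmf (height_pmf q) N = height_weight q N"
proof -
  have "(\<lambda>n. \<Sum>i<Suc n. height_weight q i) \<longlonglongrightarrow> 1"
    unfolding sum_height_weight by (rule odds_tail_LIMSEQ)
  then have "height_weight q sums 1"
    unfolding sums_def by (rule LIMSEQ_imp_Suc)
  then have "(\<integral>\<^sup>+N. ennreal (height_weight q N) \<partial>count_space UNIV) = 1"
    by (simp add: nn_integral_count_space_nat suminf_ennreal_eq[OF height_weight_nonneg])
  then show ?thesis
    unfolding height_pmf_def by (rule pmf_embed_pmf[OF height_weight_nonneg])
qed

lemma prob_height_pmf_greater: "measure_pmf.prob (height_pmf q) {n<..} = 1 - odds_tail q n"
proof -
  have "measure_pmf.prob (height_pmf q) {..n} = (\<Sum>i<Suc n. height_weight q i)"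
    by (simp add: measure_measure_pmf_finite pmf_height_pmf lessThan_Suc_atMost)
  moreover have "{n<..} = space (measure_pmf (height_pmf q)) - {..n}" by auto
  ultimately show ?thesis
    using measure_pmf.prob_compl[of "{..n}" "height_pmf q"] sum_height_weight by simp
qed

lemma pmf_bernoulli_odds:
  "Y \<subseteq> {..<n} \<Longrightarrow> pmf (bernoulli_set (odds_prob q) {..<n}) Y =
     (\<Prod>j\<in>Y. odds_prob q j) * (\<Prod>j\<in>{..<n} - Y. 1 - odds_prob q j)"
  by (rule pmf_bernoulli_set) (simp_all add: odds_prob_bounds)

lemma prob_bernoulli_odds_superset:
  "F \<subseteq> {..<n} \<Longrightarrow> measure_pmf.prob (bernoulli_set (odds_prob q) {..<n}) {X. F \<subseteq> X} =
     (\<Prod>j\<in>F. odds_prob q j)"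
  by (rule prob_bernoulli_set_superset) (simp_all add: odds_prob_bounds)

lemma pmf_odds_set_of_height_nonempty:
  assumes fin: "finite A" and ne: "A \<noteq> {}"
  shows "pmf (odds_set_of_height q N) A =
    pmf (bernoulli_set (odds_prob q) {..<Max A}) (A - {Max A}) * indicator {Suc (Max A)} N"
proof (cases N)
  case (Suc n)
  have preimage: "X \<in> insert n -` {A} \<longleftrightarrow> n = Max A \<and> X = A - {n}" if "X \<subseteq> {..<n}" for X
  proof
    assume "X \<in> insert n -` {A}"
    then have A: "A = insert n X" by simp
    then have "Max A = n" using that fin by (intro Max_eqI) auto
    then show "n = Max A \<and> X = A - {n}" using A that by auto
  qed (use Max_in[OF fin ne] in auto)
  have "pmf (odds_set_of_height q N) A =
      measure_pmf.prob (bernoulli_set (odds_prob q) {..<n}) (insert n -` {A})"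
    using Suc by (simp add: odds_set_of_height_def pmf_map)
  also have "\<dots> = measure_pmf.prob (bernoulli_set (odds_prob q) {..<n}) (if n = Max A then {A - {n}} else {})"
  proof (rule measure_pmf_prob_cong)
    fix X assume "X \<in> set_pmf (bernoulli_set (odds_prob q) {..<n})"
    then show "X \<in> insert n -` {A} \<longleftrightarrow> X \<in> (if n = Max A then {A - {n}} else {})"
      using preimage[OF set_pmf_bernoulli_set] by auto
  qed
  finally show ?thesis using Suc by (simp add: measure_pmf_single)
qed (use ne in \<open>simp add: odds_set_of_height_def\<close>)

lemma pmf_odds_set_of_height_infinite: "infinite A \<Longrightarrow> pmf (odds_set_of_height q N) A = 0"
  using finite_subset[OF set_pmf_bernoulli_set]
  by (cases N) (auto simp: odds_set_of_height_def pmf_map measure_pmf_zero_iff indicator_def)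

lemma pmf_odds_set_empty: "pmf (odds_set q) {} = odds_tail q 0"
proof -
  have "pmf (odds_set_of_height q N) {} = indicator {0} N" for N
    by (cases N) (auto simp: odds_set_of_height_def pmf_map vimage_def)
  then have "ennreal (pmf (odds_set q) {}) = (\<integral>\<^sup>+N. indicator {0} N \<partial>height_pmf q)"
    unfolding odds_set_def ennreal_pmf_bind by (intro nn_integral_cong) (simp add: indicator_def)
  also have "\<dots> = ennreal (odds_tail q 0)"
    by (simp add: emeasure_pmf_single pmf_height_pmf height_weight_def)
  finally show ?thesis using odds_tail_pos[of 0] by simp
qed

lemma pmf_odds_set_nonempty:
  assumes fin: "finite A" and ne: "A \<noteq> {}"
  shows "pmf (odds_set q) A =
    pmf (bernoulli_set (odds_prob q) {..<Max A}) (A - {Max A}) * height_weight q (Suc (Max A))"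
proof -
  define c where "c = pmf (bernoulli_set (odds_prob q) {..<Max A}) (A - {Max A})"
  have "ennreal (pmf (odds_set q) A) = (\<integral>\<^sup>+N. ennreal c * indicator {Suc (Max A)} N \<partial>height_pmf q)"
    unfolding odds_set_def ennreal_pmf_bind pmf_odds_set_of_height_nonempty[OF fin ne] c_def
    by (intro nn_integral_cong) (simp add: indicator_def)
  also have "\<dots> = ennreal (c * height_weight q (Suc (Max A)))"
    by (simp add: emeasure_pmf_single pmf_height_pmf ennreal_mult height_weight_nonneg c_def)
  finally show ?thesis unfolding c_def using height_weight_nonneg by (subst (asm) ennreal_inj) auto
qed

lemma pmf_odds_set_singleton: "pmf (odds_set q) {n} = q n * odds_tail q 0"
  using pmf_odds_set_nonempty[of "{n}"] pmf_bernoulli_odds[of "{}" n] odds_tail_0[of n]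
    height_weight_Suc[of n] by (simp add: algebra_simps)

lemma odds_set_pos:
  assumes fin: "finite A" and pos: "\<And>n. n \<in> A \<Longrightarrow> 0 < q n"
  shows "0 < pmf (odds_set q) A"
proof (cases "A = {}")
  case True then show ?thesis using odds_tail_pos by (simp add: pmf_odds_set_empty)
next
  case False
  define m where "m = Max A"
  have sub: "A - {m} \<subseteq> {..<m}" using Max_ge[OF fin] by (fastforce simp: m_def)
  have "0 < (\<Prod>j\<in>A - {m}. odds_prob q j) * (\<Prod>j\<in>{..<m} - (A - {m}). 1 - odds_prob q j)"
    using pos odds_nonneg odds_prob_less_1
    by (intro mult_pos_pos prod_pos) (auto simp: odds_prob_def add_pos_nonneg)
  moreover have "0 < height_weight q (Suc m)"
    using height_weight_Suc[of m] odds_tail_pos[of m] pos Max_in[OF fin False] by (simp add: m_def)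
  ultimately show ?thesis
    using pmf_odds_set_nonempty[OF fin False] pmf_bernoulli_odds[OF sub] by (simp add: m_def)
qed

lemma set_pmf_odds_set:
  assumes "A \<in> set_pmf (odds_set q)"
  shows "finite A" "\<And>n. n \<in> A \<Longrightarrow> 0 < q n"
proof -
  have nz: "pmf (odds_set q) A \<noteq> 0" using assms by (simp add: set_pmf_iff)
  have "pmf (odds_set q) A = 0" if "infinite A"
  proof -
    have "ennreal (pmf (odds_set q) A) = 0"
      unfolding odds_set_def ennreal_pmf_bind using pmf_odds_set_of_height_infinite[OF that] by simp
    then show ?thesis by simp
  qed
  then show fin: "finite A" using nz by blast
  fix n assume nA: "n \<in> A"
  then have ne: "A \<noteq> {}" by auto
  define m where "m = Max A"
  have sub: "A - {m} \<subseteq> {..<m}" using Max_ge[OF fin] by (fastforce simp: m_def)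
  have nz_set: "pmf (bernoulli_set (odds_prob q) {..<m}) (A - {m}) \<noteq> 0"
    and nz_height: "height_weight q (Suc m) \<noteq> 0"
    using nz pmf_odds_set_nonempty[OF fin ne] by (auto simp: m_def)
  show "0 < q n"
  proof (cases "n = m")
    case True
    then show ?thesis using nz_height height_weight_Suc[of m] odds_nonneg[of m]
      by (simp add: order.order_iff_strict)
  next
    case False
    then have "odds_prob q n \<noteq> 0"
      using nA nz_set pmf_bernoulli_odds[OF sub] fin by (auto simp: prod_zero_iff)
    then show ?thesis using odds_nonneg[of n] by (auto simp: odds_prob_def order.order_iff_strict)
  qed
qed

lemma prob_bernoulli_odds_insert_superset:
  assumes fin: "finite F" and ne: "F \<noteq> {}"
  shows "measure_pmf.prob (bernoulli_set (odds_prob q) {..<n}) {X. F \<subseteq> insert n X} =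
    (if n = Max F then (\<Prod>j\<in>F - {n}. odds_prob q j) else if Max F < n then (\<Prod>j\<in>F. odds_prob q j) else 0)"
proof -
  define m where "m = Max F"
  have mF: "m \<in> F" and Fle: "\<And>x. x \<in> F \<Longrightarrow> x \<le> m" using fin ne by (simp_all add: m_def)
  let ?B = "bernoulli_set (odds_prob q) {..<n}"
  consider "n = m" | "m < n" | "n < m" by linarith
  then show ?thesis
  proof cases
    case 1
    then have "measure_pmf.prob ?B {X. F \<subseteq> insert n X} = measure_pmf.prob ?B {X. F - {m} \<subseteq> X}"
      by (intro arg_cong[where f="measure_pmf.prob _"]) auto
    also have "\<dots> = (\<Prod>j\<in>F - {m}. odds_prob q j)"
      by (rule prob_bernoulli_odds_superset) (use Fle 1 in \<open>auto simp: order.order_iff_strict\<close>)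
    finally show ?thesis using 1 by (simp add: m_def)
  next
    case 2
    then have "measure_pmf.prob ?B {X. F \<subseteq> insert n X} = measure_pmf.prob ?B {X. F \<subseteq> X}"
      using Fle by (intro arg_cong[where f="measure_pmf.prob _"]) fastforce
    also have "\<dots> = (\<Prod>j\<in>F. odds_prob q j)"
      by (rule prob_bernoulli_odds_superset) (use Fle 2 in fastforce)
    finally show ?thesis using 2 by (simp add: m_def)
  next
    case 3
    have "\<not> F \<subseteq> insert n X" if "X \<in> set_pmf ?B" for X
      using set_pmf_bernoulli_set[OF that] mF 3 by auto
    then show ?thesis using 3 by (auto simp: measure_pmf_zero_iff m_def)
  qed
qed

lemma prob_odds_set_of_height_superset:
  assumes fin: "finite F" and ne: "F \<noteq> {}"
  shows "measure_pmf.prob (odds_set_of_height q N) {X. F \<subseteq> X} =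
    (\<Prod>j\<in>F - {Max F}. odds_prob q j) * indicator {Suc (Max F)} N
    + (\<Prod>j\<in>F. odds_prob q j) * indicator {Suc (Max F)<..} N"
proof (cases N)
  case (Suc n)
  then have "measure_pmf.prob (odds_set_of_height q N) {X. F \<subseteq> X} =
      measure_pmf.prob (bernoulli_set (odds_prob q) {..<n}) {X. F \<subseteq> insert n X}"
    by (simp add: odds_set_of_height_def vimage_def)
  then show ?thesis
    using Suc prob_bernoulli_odds_insert_superset[OF fin ne, of n] by (auto simp: indicator_def)
qed (use ne in \<open>simp add: odds_set_of_height_def\<close>)

lemma prob_odds_set_superset:
  assumes fin: "finite F"
  shows "measure_pmf.prob (odds_set q) {X. F \<subseteq> X} = (\<Prod>j\<in>F. odds_prob q j)"
proof (cases "F = {}")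
  case ne: False
  define m where "m = Max F"
  define a where "a = (\<Prod>j\<in>F - {m}. odds_prob q j)"
  define b where "b = (\<Prod>j\<in>F. odds_prob q j)"
  have a0: "0 \<le> a" and b0: "0 \<le> b" unfolding a_def b_def using odds_prob_bounds by (simp_all add: prod_nonneg)
  have ba: "b = odds_prob q m * a"
    unfolding a_def b_def m_def using fin ne by (simp add: prod.remove)
  have "emeasure (odds_set q) {X. F \<subseteq> X} =
      (\<integral>\<^sup>+N. emeasure (odds_set_of_height q N) {X. F \<subseteq> X} \<partial>height_pmf q)"
    unfolding odds_set_def by (rule emeasure_bind_pmf)
  also have "\<dots> = (\<integral>\<^sup>+N. (ennreal a * indicator {Suc m} N + ennreal b * indicator {Suc m<..} N) \<partial>height_pmf q)"
    by (intro nn_integral_cong) (simp add: measure_pmf.emeasure_eq_measure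
        prob_odds_set_of_height_superset[OF fin ne] a_def b_def m_def indicator_def)
  also have "\<dots> = ennreal a * emeasure (height_pmf q) {Suc m} + ennreal b * emeasure (height_pmf q) {Suc m<..}"
    by (simp add: nn_integral_add nn_integral_cmult_indicator)
  also have "\<dots> = ennreal (a * height_weight q (Suc m) + b * (1 - odds_tail q (Suc m)))"
  proof -
    have p1: "0 \<le> a * height_weight q (Suc m)" and p2: "0 \<le> b * (1 - odds_tail q (Suc m))"
      using a0 b0 height_weight_nonneg[of "Suc m"] odds_tail_le_1[of "Suc m"] by simp_all
    have "emeasure (height_pmf q) {Suc m} = ennreal (height_weight q (Suc m))"
      by (simp add: emeasure_pmf_single pmf_height_pmf)
    moreover have "emeasure (height_pmf q) {Suc m<..} = ennreal (1 - odds_tail q (Suc m))"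
      by (simp add: measure_pmf.emeasure_eq_measure prob_height_pmf_greater)
    ultimately show ?thesis
      using a0 b0 height_weight_nonneg[of "Suc m"] odds_tail_le_1[of "Suc m"]
      by (simp add: ennreal_plus[OF p1 p2] ennreal_mult)
  qed
  also have "a * height_weight q (Suc m) + b * (1 - odds_tail q (Suc m)) = b"
    using height_weight_Suc'[of m] ba by (simp add: algebra_simps)
  finally show ?thesis using b0 unfolding b_def by (simp add: measure_pmf.emeasure_eq_measure)
qed simp

lemma indep_elems_odds_set: "indep_elems (odds_set q)"
  unfolding indep_elems_def using prob_odds_set_superset[of "{_}"] prob_odds_set_superset by simp

end

section \<open>Sizes of worlds in FO(TI)\<close>

lemma measure_pmf_prob_le_of_finite_sums:
  assumes "\<And>F. finite F \<Longrightarrow> F \<subseteq> A \<Longrightarrow> sum (pmf P) F \<le> b"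
  shows "measure_pmf.prob P A \<le> b"
proof -
  have abs: "Infinite_Set_Sum.abs_summable_on (pmf P) A" by (rule pmf_abs_summable)
  then have "pmf P summable_on A"
    using abs_summable_equivalent abs_summable_summable by blast
  then have "infsum (pmf P) A \<le> b"
    by (rule infsum_le_finite_sums) (use assms in auto)
  then show ?thesis by (simp add: measure_pmf_conv_infsetsum infsetsum_infsum[OF abs])
qed

abbreviation member_prob :: "'a set pmf \<Rightarrow> 'a \<Rightarrow> real" where
  "member_prob P f \<equiv> measure_pmf.prob P {X. f \<in> X}"

lemma expected_card_le_sum_member_prob:
  assumes finA: "finite A" and fin: "\<And>X. X \<in> A \<Longrightarrow> finite X"
  shows "(\<Sum>X\<in>A. pmf P X * real (card X)) \<le> (\<Sum>f\<in>\<Union>A. member_prob P f)"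
proof -
  have finU: "finite (\<Union>A)" using finA fin by blast
  have "(\<Sum>X\<in>A. pmf P X * real (card X)) = (\<Sum>X\<in>A. \<Sum>f\<in>{f\<in>\<Union>A. f \<in> X}. pmf P X)"
  proof (rule sum.cong[OF refl])
    fix X assume "X \<in> A"
    then have "{f\<in>\<Union>A. f \<in> X} = X" by auto
    then show "pmf P X * real (card X) = (\<Sum>f\<in>{f\<in>\<Union>A. f \<in> X}. pmf P X)" by simp
  qed
  also have "\<dots> = (\<Sum>f\<in>\<Union>A. \<Sum>X\<in>{X. X \<in> A \<and> f \<in> X}. pmf P X)"
    by (rule sum.swap_restrict[OF finA finU])
  also have "\<dots> \<le> (\<Sum>f\<in>\<Union>A. member_prob P f)"
  proof (rule sum_mono)
    fix f
    have "(\<Sum>X\<in>{X. X \<in> A \<and> f \<in> X}. pmf P X) = measure_pmf.prob P {X. X \<in> A \<and> f \<in> X}"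
      by (rule measure_measure_pmf_finite[symmetric]) (use finA in auto)
    also have "\<dots> \<le> member_prob P f" by (rule measure_pmf.finite_measure_mono) auto
    finally show "(\<Sum>X\<in>{X. X \<in> A \<and> f \<in> X}. pmf P X) \<le> member_prob P f" .
  qed
  finally show ?thesis .
qed

context
  fixes P :: "'a set pmf"
  assumes indep: "indep_elems P"
begin

lemma prob_superset_avoiding:
  assumes "finite H"
  shows "finite F \<Longrightarrow> F \<inter> H = {} \<Longrightarrow> measure_pmf.prob P {X. F \<subseteq> X \<and> X \<inter> H = {}} =
    (\<Prod>f\<in>F. member_prob P f) * (\<Prod>h\<in>H. 1 - member_prob P h)"
  using assms
proof (induction H arbitrary: F rule: finite_induct)
  case empty
  then show ?case using indep unfolding indep_elems_def by simp
next
  case (insert h H)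
  have eq: "{X. F \<subseteq> X \<and> X \<inter> insert h H = {}} =
      {X. F \<subseteq> X \<and> X \<inter> H = {}} - {X. insert h F \<subseteq> X \<and> X \<inter> H = {}}" by auto
  have "measure_pmf.prob P {X. F \<subseteq> X \<and> X \<inter> insert h H = {}} =
      measure_pmf.prob P {X. F \<subseteq> X \<and> X \<inter> H = {}} - measure_pmf.prob P {X. insert h F \<subseteq> X \<and> X \<inter> H = {}}"
    unfolding eq by (rule measure_pmf.finite_measure_Diff) auto
  also have "\<dots> = (\<Prod>f\<in>F. member_prob P f) * (\<Prod>h\<in>H. 1 - member_prob P h)
      - (\<Prod>f\<in>insert h F. member_prob P f) * (\<Prod>h\<in>H. 1 - member_prob P h)"
    using insert.IH[of F] insert.IH[of "insert h F"] insert.prems insert.hyps by auto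
  also have "\<dots> = (\<Prod>f\<in>F. member_prob P f) * (\<Prod>h\<in>insert h H. 1 - member_prob P h)"
    using insert.prems insert.hyps by (auto simp: algebra_simps)
  finally show ?case .
qed

text \<open>A single world \<open>D\<close> of positive probability caps the expected size:
  \<open>pmf P D \<le> \<Prod>h\<notin>D. (1 - member_prob P h) \<le> exp (- \<Sum>h\<notin>D. member_prob P h)\<close>.\<close>

lemma sum_member_prob_le:
  assumes D: "D \<in> set_pmf P" "finite D" and G: "finite G"
  shows "(\<Sum>f\<in>G. member_prob P f) \<le> real (card D) - ln (pmf P D)"
proof -
  define H where "H = G - D"
  have finH: "finite H" using G by (simp add: H_def)
  have pos: "0 < pmf P D" using D by (simp add: pmf_positive)
  have "pmf P D \<le> measure_pmf.prob P {X. {} \<subseteq> X \<and> X \<inter> H = {}}"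
    unfolding measure_pmf_single[symmetric]
    by (rule measure_pmf.finite_measure_mono) (auto simp: H_def)
  also have "\<dots> = (\<Prod>h\<in>H. 1 - member_prob P h)" using prob_superset_avoiding[OF finH, of "{}"] by simp
  also have "\<dots> \<le> (\<Prod>h\<in>H. exp (- member_prob P h))"
  proof (rule prod_mono)
    fix h show "0 \<le> 1 - member_prob P h \<and> 1 - member_prob P h \<le> exp (- member_prob P h)"
      using exp_ge_add_one_self[of "- member_prob P h"] by simp
  qed
  also have "\<dots> = exp (- (\<Sum>h\<in>H. member_prob P h))"
    using exp_sum[OF finH, of "\<lambda>h. - member_prob P h"] by (simp add: sum_negf)
  finally have "ln (pmf P D) \<le> - (\<Sum>h\<in>H. member_prob P h)"
    using pos by (metis ln_exp ln_le_cancel_iff exp_gt_zero)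
  moreover have "(\<Sum>f\<in>G \<inter> D. member_prob P f) \<le> real (card D)"
    using card_mono[OF D(2), of "G \<inter> D"] sum_mono[of "G \<inter> D" "member_prob P" "\<lambda>_. 1"] by auto
  moreover have "(\<Sum>f\<in>G. member_prob P f) = (\<Sum>f\<in>G \<inter> D. member_prob P f) + (\<Sum>f\<in>H. member_prob P f)"
    unfolding H_def using G by (metis Diff_eq sum.Int_Diff)
  ultimately show ?thesis by linarith
qed

lemma card_tail_bound:
  assumes fin: "\<And>X. X \<in> set_pmf P \<Longrightarrow> finite X"
  shows "\<exists>K. \<forall>t::nat. 0 < t \<longrightarrow> measure_pmf.prob P {X. t \<le> card X} \<le> K / real t"
proof -
  obtain D where D: "D \<in> set_pmf P" using set_pmf_not_empty[of P] by blast
  define K where "K = real (card D) - ln (pmf P D)"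
  have bound: "(\<Sum>f\<in>G. member_prob P f) \<le> K" if "finite G" for G
    unfolding K_def by (rule sum_member_prob_le[OF D fin[OF D] that])
  show ?thesis
  proof (intro exI allI impI)
    fix t :: nat assume t: "0 < t"
    show "measure_pmf.prob P {X. t \<le> card X} \<le> K / real t"
    proof (rule measure_pmf_prob_le_of_finite_sums)
      fix A :: "'a set set" assume finA: "finite A" and A: "A \<subseteq> {X. t \<le> card X}"
      define A' where "A' = A \<inter> set_pmf P"
      have finA': "finite A'" using finA by (simp add: A'_def)
      have "real t * sum (pmf P) A' \<le> (\<Sum>X\<in>A'. pmf P X * real (card X))"
        unfolding sum_distrib_left
        by (rule sum_mono) (use A in \<open>auto simp: A'_def mult.commute mult_right_mono\<close>)
      also have "\<dots> \<le> (\<Sum>f\<in>\<Union>A'. member_prob P f)"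
        by (rule expected_card_le_sum_member_prob[OF finA']) (simp add: A'_def fin)
      also have "\<dots> \<le> K" using finA' fin by (intro bound) (auto simp: A'_def)
      finally have "real t * sum (pmf P) A' \<le> K" .
      moreover have "sum (pmf P) A = sum (pmf P) A'"
        unfolding A'_def by (rule sum.mono_neutral_right) (auto simp: finA set_pmf_iff)
      ultimately show "sum (pmf P) A \<le> K / real t"
        using t by (simp add: field_simps)
    qed
  qed
qed

end

lemma finite_fo_consts: "finite (fo_consts \<phi>)"
proof -
  have "finite (trm_consts t)" for t :: "'a trm" by (cases t) auto
  then show ?thesis by (induction \<phi>) auto
qed

lemma finite_adom: "finite D \<Longrightarrow> finite (adom D)"
  unfolding adom_def by (auto simp: case_prod_beta)

lemma card_adom_le:
  assumes D: "instance_over Sin D" and M: "\<forall>R\<in>Sin. arity R \<le> M"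
  shows "card (adom D) \<le> M * card D"
proof -
  have finD: "finite D" using D by (simp add: instance_over_def)
  have "adom D = (\<Union>x\<in>D. set (snd x))" unfolding adom_def by (auto simp: case_prod_beta)
  then have "card (adom D) \<le> (\<Sum>x\<in>D. card (set (snd x)))"
    by (simp add: card_UN_le[OF finD])
  also have "\<dots> \<le> (\<Sum>x\<in>D. M)"
  proof (rule sum_mono)
    fix x assume "x \<in> D"
    then have "fst x \<in> Sin" "length (snd x) = arity (fst x)"
      using D unfolding instance_over_def by (auto simp: case_prod_beta)
    then show "card (set (snd x)) \<le> M" using M card_length[of "snd x"] by fastforce
  qed
  finally show ?thesis by (simp add: mult.commute)
qed

lemma card_view_apply_le:
  assumes "finite S" "finite D"
  shows "card (view_apply S \<Phi> D) \<le> (\<Sum>R\<in>S. card (adom D \<union> fo_consts (\<Phi> R)) ^ arity R)"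
proof -
  define L where "L R = {as. set as \<subseteq> adom D \<union> fo_consts (\<Phi> R) \<and> length as = arity R}" for R
  have finA: "finite (adom D \<union> fo_consts (\<Phi> R))" for R
    using finite_adom[OF assms(2)] finite_fo_consts by simp
  have finL: "finite (L R)" for R unfolding L_def by (rule finite_lists_length_eq[OF finA])
  have "view_apply S \<Phi> D \<subseteq> (\<Union>R\<in>S. Pair R ` L R)"
    unfolding view_apply_def L_def by auto
  then have "card (view_apply S \<Phi> D) \<le> card (\<Union>R\<in>S. Pair R ` L R)"
    by (rule card_mono[rotated]) (use assms(1) finL in auto)
  also have "\<dots> \<le> (\<Sum>R\<in>S. card (Pair R ` L R))" by (rule card_UN_le[OF assms(1)])
  also have "\<dots> \<le> (\<Sum>R\<in>S. card (L R))" by (intro sum_mono card_image_le finL)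
  also have "\<dots> = (\<Sum>R\<in>S. card (adom D \<union> fo_consts (\<Phi> R)) ^ arity R)"
    unfolding L_def by (intro sum.cong refl card_lists_length_eq finA)
  finally show ?thesis .
qed

lemma card_view_apply_poly_bound:
  fixes \<Phi> :: "rel \<Rightarrow> 'a fo"
  assumes fv: "fo_view Sin S \<Phi>"
  shows "\<exists>C k. 1 \<le> C \<and> (\<forall>D. instance_over Sin D \<longrightarrow> card (view_apply S \<Phi> D) \<le> C * (card D + 1) ^ k)"
proof -
  have Sin: "finite Sin" and S: "finite S"
    using fv by (auto simp: fo_view_def schema_def)
  define M where "M = Max (arity ` Sin)"
  define k where "k = Max (arity ` S)"
  define c where "c = (\<Sum>R\<in>S. card (fo_consts (\<Phi> R)))"
  define B where "B = M + c + 1"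
  define C where "C = card S * B ^ k + 1"
  have M: "\<forall>R\<in>Sin. arity R \<le> M" using Sin by (auto simp: M_def)
  show ?thesis
  proof (intro exI conjI allI impI)
    show "1 \<le> C" by (simp add: C_def)
    fix D :: "'a inst" assume D: "instance_over Sin D"
    define d where "d = card D"
    have "card (view_apply S \<Phi> D) \<le> (\<Sum>R\<in>S. card (adom D \<union> fo_consts (\<Phi> R)) ^ arity R)"
      using D by (intro card_view_apply_le S) (simp add: instance_over_def)
    also have "\<dots> \<le> (\<Sum>R\<in>S. (B * (d + 1)) ^ k)"
    proof (rule sum_mono)
      fix R assume R: "R \<in> S"
      have "card (adom D \<union> fo_consts (\<Phi> R)) \<le> card (adom D) + card (fo_consts (\<Phi> R))"
        by (rule card_Un_le)
      also have "\<dots> \<le> M * d + c"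
        using card_adom_le[OF D M] member_le_sum[OF R _ S, of "\<lambda>R. card (fo_consts (\<Phi> R))"]
        by (simp add: d_def c_def)
      also have "\<dots> \<le> B * (d + 1)" by (simp add: B_def algebra_simps)
      finally have "card (adom D \<union> fo_consts (\<Phi> R)) ^ arity R \<le> (B * (d + 1)) ^ arity R"
        by (rule power_mono) simp
      also have "\<dots> \<le> (B * (d + 1)) ^ k"
        by (rule power_increasing) (use S R in \<open>auto simp: B_def k_def\<close>)
      finally show "card (adom D \<union> fo_consts (\<Phi> R)) ^ arity R \<le> (B * (d + 1)) ^ k" .
    qed
    also have "\<dots> = card S * B ^ k * (d + 1) ^ k"
      by (simp only: sum_constant power_mult_distrib mult.assoc of_nat_id)
    also have "\<dots> \<le> C * (d + 1) ^ k" by (simp add: C_def)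
    finally show "card (view_apply S \<Phi> D) \<le> C * (card D + 1) ^ k" by (simp add: d_def)
  qed
qed

lemma FO_TI_card_tail:
  assumes "in_FO_TI S P"
  shows "\<exists>C K k. 1 \<le> C \<and> (\<forall>t. measure_pmf.prob P {D. C * (t + 1) ^ k < card D} \<le> K / real (t + 1))"
proof -
  obtain Sin I \<Phi> where pdb: "pdb Sin I" and indep: "indep_elems I" and fv: "fo_view Sin S \<Phi>"
    and P: "P = map_pmf (view_apply S \<Phi>) I"
    using assms unfolding in_FO_TI_def tuple_independent_iff_indep_elems by blast
  have inst: "\<And>X. X \<in> set_pmf I \<Longrightarrow> instance_over Sin X" using pdb by (simp add: pdb_def)
  then have finI: "\<And>X. X \<in> set_pmf I \<Longrightarrow> finite X" by (simp add: instance_over_def)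
  obtain K where K: "\<forall>t::nat. 0 < t \<longrightarrow> measure_pmf.prob I {X. t \<le> card X} \<le> K / real t"
    using card_tail_bound[OF indep finI] by blast
  obtain C k where C: "1 \<le> C"
    and Ck: "\<forall>D. instance_over Sin D \<longrightarrow> card (view_apply S \<Phi> D) \<le> C * (card D + 1) ^ k"
    using card_view_apply_poly_bound[OF fv] by blast
  show ?thesis
  proof (intro exI conjI allI)
    show "1 \<le> C" by (rule C)
    fix t :: nat
    have "measure_pmf.prob P {D. C * (t + 1) ^ k < card D} =
        measure_pmf.prob I {X. C * (t + 1) ^ k < card (view_apply S \<Phi> X)}"
      by (simp add: P vimage_def)
    also have "\<dots> \<le> measure_pmf.prob I {X. t + 1 \<le> card X}"
    proof (rule measure_pmf.finite_measure_mono_AE)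
      have "t + 1 \<le> card X" if "X \<in> set_pmf I" "C * (t + 1) ^ k < card (view_apply S \<Phi> X)" for X
      proof -
        have "C * (t + 1) ^ k < C * (card X + 1) ^ k" using Ck inst that by (meson order_less_le_trans)
        then have "(t + 1) ^ k < (card X + 1) ^ k" by simp
        then show ?thesis using power_less_imp_less_base[of "t + 1" k "card X + 1"] by simp
      qed
      then show "AE X in I. X \<in> {X. C * (t + 1) ^ k < card (view_apply S \<Phi> X)} \<longrightarrow> X \<in> {X. t + 1 \<le> card X}"
        by (simp add: AE_measure_pmf_iff)
    qed simp
    also have "\<dots> \<le> K / real (t + 1)" using K[rule_format, of "t + 1"] by simp
    finally show "measure_pmf.prob P {D. C * (t + 1) ^ k < card D} \<le> K / real (t + 1)" .
  qed
qed

text \<open>A PDB in \<open>FO(TI)\<close> has \<open>P(|D| > C (t+1)^k) = O(1/t)\<close>, whereas a world of size beyond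
  \<open>(n 2^(n+3))^n\<close> carrying mass \<open>2^-(n+2)\<close> violates this at \<open>t + 1 = K 2^(n+3)\<close>.\<close>

lemma heavy_tail_not_FO_TI:
  fixes P :: "'u inst pmf" and E :: "nat \<Rightarrow> 'u inst"
  assumes big: "\<And>n. (n * 2 ^ (n + 3)) ^ n < card (E n)"
    and heavy: "\<And>n A. E n \<in> A \<Longrightarrow> 1 / 2 ^ (n + 2) \<le> measure_pmf.prob P A"
  shows "\<not> in_FO_TI S P"
proof
  assume "in_FO_TI S P"
  then obtain C K k where C: "1 \<le> C"
    and tail: "\<And>t. measure_pmf.prob P {D. C * (t + 1) ^ k < card D} \<le> K / real (t + 1)"
    using FO_TI_card_tail by blast
  define K' where "K' = nat \<lceil>max K 1\<rceil>"
  have K'1: "1 \<le> K'" and KK': "K \<le> real K'" unfolding K'_def by linarith+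
  define n where "n = C + K' + k + 1"
  define t where "t = K' * 2 ^ (n + 3) - 1"
  have t1: "t + 1 = K' * 2 ^ (n + 3)" using K'1 unfolding t_def by (simp add: Suc_leI)
  have b1: "1 \<le> n * 2 ^ (n + 3)" by (simp add: n_def Suc_leI)
  have "C * (t + 1) ^ k \<le> n * (n * 2 ^ (n + 3)) ^ k"
    unfolding t1 by (intro mult_mono power_mono) (simp_all add: n_def)
  also have "\<dots> \<le> (n * 2 ^ (n + 3)) ^ (k + 1)" by simp
  also have "\<dots> \<le> (n * 2 ^ (n + 3)) ^ n"
    by (rule power_increasing[OF _ b1]) (simp add: n_def)
  also have "\<dots> < card (E n)" by (rule big)
  finally have "1 / 2 ^ (n + 2) \<le> measure_pmf.prob P {D. C * (t + 1) ^ k < card D}"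
    by (intro heavy) simp
  also have "\<dots> \<le> K / real (t + 1)" by (rule tail)
  also have "\<dots> \<le> real K' / real (t + 1)" using KK' by (simp add: divide_right_mono)
  also have "\<dots> = 1 / 2 ^ (n + 3)" unfolding t1 using K'1 by simp
  finally have "(1::real) / 2 ^ (n + 2) \<le> 1 / 2 ^ (n + 3)" .
  moreover have "(1::real) / 2 ^ (n + 3) < 1 / 2 ^ (n + 2)"
    by (intro divide_strict_left_mono power_strict_increasing) auto
  ultimately show False by linarith
qed

lemma exists_heavy_tail_pmf:
  fixes P :: "'a pmf"
  assumes E: "\<And>n. E n \<in> set_pmf P"
  shows "\<exists>P'. set_pmf P' = set_pmf P \<and> (\<forall>n A. E n \<in> A \<longrightarrow> 1 / 2 ^ (n + 2) \<le> measure_pmf.prob P' A)"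
proof -
  define f where "f = (\<lambda>((b :: bool, n :: nat), D). if b then D else E n)"
  define Q where "Q = pair_pmf (pair_pmf (bernoulli_pmf (1/2)) (geometric_pmf (1/2))) P"
  have geo: "set_pmf (geometric_pmf (1/2)) = UNIV"
    by (auto simp: set_pmf_iff geometric_pmf.rep_eq)
  have "set_pmf (map_pmf f Q) = set_pmf P"
  proof
    show "set_pmf (map_pmf f Q) \<subseteq> set_pmf P" unfolding Q_def f_def using E by auto
    show "set_pmf P \<subseteq> set_pmf (map_pmf f Q)"
    proof
      fix D assume "D \<in> set_pmf P"
      then have "((True, 0), D) \<in> set_pmf Q" unfolding Q_def using geo by (auto simp: set_pmf_bernoulli)
      then show "D \<in> set_pmf (map_pmf f Q)" unfolding f_def by force
    qed
  qed
  moreover have "1 / 2 ^ (n + 2) \<le> measure_pmf.prob (map_pmf f Q) A" if "E n \<in> A" for n A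
  proof -
    have "measure_pmf.prob Q {(x, D). x \<in> {(False, n)} \<and> D \<in> UNIV} =
        measure_pmf.prob (pair_pmf (bernoulli_pmf (1/2)) (geometric_pmf (1/2))) {(False, n)}"
      unfolding Q_def prob_pair_pmf_Times by simp
    also have "\<dots> = 1 / 2 ^ (n + 2)"
      by (simp add: measure_pmf_single pmf_pair geometric_pmf.rep_eq power_add field_simps)
    finally have "1 / 2 ^ (n + 2) = measure_pmf.prob Q {(x, D). x \<in> {(False, n)} \<and> D \<in> UNIV}" ..
    also have "\<dots> \<le> measure_pmf.prob Q (f -` A)"
      by (rule measure_pmf.finite_measure_mono) (use that in \<open>auto simp: f_def\<close>)
    finally show ?thesis by simp
  qed
  ultimately show ?thesis by blast
qed

lemma exists_not_FO_TI_with_support: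
  fixes P :: "'u inst pmf"
  assumes unbounded: "\<not> bounded_instance_size (set_pmf P)"
  shows "\<exists>P'. set_pmf P' = set_pmf P \<and> \<not> in_FO_TI S P'"
proof -
  have large: "\<exists>D. D \<in> set_pmf P \<and> k < card D" for k
    using unbounded unfolding bounded_instance_size_def by (meson leI)
  define E where "E n = (SOME D. D \<in> set_pmf P \<and> (n * 2 ^ (n + 3)) ^ n < card D)" for n :: nat
  have E: "E n \<in> set_pmf P \<and> (n * 2 ^ (n + 3)) ^ n < card (E n)" for n
    unfolding E_def by (rule someI_ex[OF large])
  obtain P' where P': "set_pmf P' = set_pmf P"
    and heavy: "\<forall>n A. E n \<in> A \<longrightarrow> 1 / 2 ^ (n + 2) \<le> measure_pmf.prob P' A"
    using exists_heavy_tail_pmf[of E P] E by blast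
  have "\<not> in_FO_TI S P'"
    by (rule heavy_tail_not_FO_TI[of E]) (use E heavy in blast)+
  then show ?thesis using P' by blast
qed

section \<open>Derived first-order formulas\<close>

fun Conjs :: "'u fo list \<Rightarrow> 'u fo" where
  "Conjs [] = FTrue"
| "Conjs (\<phi> # \<phi>s) = Conj \<phi> (Conjs \<phi>s)"

fun Disjs :: "'u fo list \<Rightarrow> 'u fo" where
  "Disjs [] = FFalse"
| "Disjs (\<phi> # \<phi>s) = Disj \<phi> (Disjs \<phi>s)"

primrec Exs :: "nat \<Rightarrow> nat \<Rightarrow> 'u fo \<Rightarrow> 'u fo" where
  "Exs v 0 \<phi> = \<phi>"
| "Exs v (Suc n) \<phi> = FEx v (Exs (Suc v) n \<phi>)"

definition Alls :: "nat \<Rightarrow> nat \<Rightarrow> 'u fo \<Rightarrow> 'u fo" where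
  "Alls v n \<phi> = Neg (Exs v n (Neg \<phi>))"

definition Vars :: "nat \<Rightarrow> nat \<Rightarrow> 'u trm list" where
  "Vars v n = map Var [v..<v + n]"

definition upd_block :: "(nat \<Rightarrow> 'u) \<Rightarrow> nat \<Rightarrow> 'u list \<Rightarrow> nat \<Rightarrow> 'u" where
  "upd_block \<sigma> v vs = (\<lambda>i. if v \<le> i \<and> i < v + length vs then vs ! (i - v) else \<sigma> i)"

lemma sat_Conjs: "sat D A \<sigma> (Conjs \<phi>s) \<longleftrightarrow> (\<forall>\<phi>\<in>set \<phi>s. sat D A \<sigma> \<phi>)"
  by (induction \<phi>s) auto

lemma sat_Disjs: "sat D A \<sigma> (Disjs \<phi>s) \<longleftrightarrow> (\<exists>\<phi>\<in>set \<phi>s. sat D A \<sigma> \<phi>)"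
  by (induction \<phi>s) auto

lemma upd_block_Nil: "upd_block \<sigma> v [] = \<sigma>"
  by (rule ext) (auto simp: upd_block_def)

lemma upd_block_Cons: "upd_block (\<sigma>(v := a)) (Suc v) vs = upd_block \<sigma> v (a # vs)"
proof
  fix i
  consider "i < v" | "i = v" | "v < i" by linarith
  then show "upd_block (\<sigma>(v := a)) (Suc v) vs i = upd_block \<sigma> v (a # vs) i"
  proof cases
    case 3
    then have "i - v = Suc (i - Suc v)" by simp
    then show ?thesis using 3 by (simp add: upd_block_def)
  qed (auto simp: upd_block_def)
qed

lemma upd_block_below: "i < v \<Longrightarrow> upd_block \<sigma> v vs i = \<sigma> i"
  by (simp add: upd_block_def)

lemma upd_block_nth: "i < length vs \<Longrightarrow> upd_block \<sigma> v vs (v + i) = vs ! i"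
  by (simp add: upd_block_def)

lemma map_eval_Vars: "length vs = n \<Longrightarrow> map (eval_trm (upd_block \<sigma> v vs)) (Vars v n) = vs"
  by (auto simp: Vars_def upd_block_def intro: nth_equalityI)

lemma sat_Exs:
  "sat D A \<sigma> (Exs v n \<phi>) \<longleftrightarrow> (\<exists>vs. length vs = n \<and> set vs \<subseteq> A \<and> sat D A (upd_block \<sigma> v vs) \<phi>)"
proof (induction n arbitrary: v \<sigma>)
  case 0 then show ?case by (simp add: upd_block_Nil)
next
  case (Suc n)
  have "sat D A \<sigma> (Exs v (Suc n) \<phi>) \<longleftrightarrow> (\<exists>a\<in>A. sat D A (\<sigma>(v := a)) (Exs (Suc v) n \<phi>))"
    by simp
  also have "\<dots> \<longleftrightarrow>
      (\<exists>a\<in>A. \<exists>vs. length vs = n \<and> set vs \<subseteq> A \<and> sat D A (upd_block \<sigma> v (a # vs)) \<phi>)"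
    by (simp only: Suc.IH upd_block_Cons)
  also have "\<dots> \<longleftrightarrow> (\<exists>vs. length vs = Suc n \<and> set vs \<subseteq> A \<and> sat D A (upd_block \<sigma> v vs) \<phi>)"
  proof
    assume "\<exists>a\<in>A. \<exists>vs. length vs = n \<and> set vs \<subseteq> A \<and> sat D A (upd_block \<sigma> v (a # vs)) \<phi>"
    then obtain a vs where "a \<in> A" "length vs = n" "set vs \<subseteq> A" "sat D A (upd_block \<sigma> v (a # vs)) \<phi>"
      by blast
    then show "\<exists>vs. length vs = Suc n \<and> set vs \<subseteq> A \<and> sat D A (upd_block \<sigma> v vs) \<phi>"
      by (intro exI[of _ "a # vs"]) simp
  next
    assume "\<exists>vs. length vs = Suc n \<and> set vs \<subseteq> A \<and> sat D A (upd_block \<sigma> v vs) \<phi>"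
    then obtain a vs where "length vs = n" "set (a # vs) \<subseteq> A" "sat D A (upd_block \<sigma> v (a # vs)) \<phi>"
      by (auto simp: length_Suc_conv)
    then show "\<exists>a\<in>A. \<exists>vs. length vs = n \<and> set vs \<subseteq> A \<and> sat D A (upd_block \<sigma> v (a # vs)) \<phi>"
      by auto
  qed
  finally show ?case .
qed

lemma sat_Alls:
  "sat D A \<sigma> (Alls v n \<phi>) \<longleftrightarrow> (\<forall>vs. length vs = n \<longrightarrow> set vs \<subseteq> A \<longrightarrow> sat D A (upd_block \<sigma> v vs) \<phi>)"
  unfolding Alls_def sat.simps sat_Exs by blast

lemma fv_Exs: "fv (Exs v n \<phi>) = fv \<phi> - {v..<v + n}"
  by (induction n arbitrary: v) auto

lemma fv_Alls: "fv (Alls v n \<phi>) = fv \<phi> - {v..<v + n}"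
  by (simp add: Alls_def fv_Exs)

lemma fv_Conjs: "fv (Conjs \<phi>s) = (\<Union>\<phi>\<in>set \<phi>s. fv \<phi>)"
  by (induction \<phi>s) auto

lemma fv_Disjs: "fv (Disjs \<phi>s) = (\<Union>\<phi>\<in>set \<phi>s. fv \<phi>)"
  by (induction \<phi>s) auto

lemma rels_Exs: "rels (Exs v n \<phi>) = rels \<phi>"
  by (induction n arbitrary: v) auto

lemma rels_Alls: "rels (Alls v n \<phi>) = rels \<phi>"
  by (simp add: Alls_def rels_Exs)

lemma rels_Conjs: "rels (Conjs \<phi>s) = (\<Union>\<phi>\<in>set \<phi>s. rels \<phi>)"
  by (induction \<phi>s) auto

lemma rels_Disjs: "rels (Disjs \<phi>s) = (\<Union>\<phi>\<in>set \<phi>s. rels \<phi>)"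
  by (induction \<phi>s) auto

lemma fo_consts_Conjs: "fo_consts (Conjs \<phi>s) = (\<Union>\<phi>\<in>set \<phi>s. fo_consts \<phi>)"
  by (induction \<phi>s) auto

lemma fo_consts_Disjs: "fo_consts (Disjs \<phi>s) = (\<Union>\<phi>\<in>set \<phi>s. fo_consts \<phi>)"
  by (induction \<phi>s) auto

lemma set_subset_adom: "(R, as) \<in> X \<Longrightarrow> set as \<subseteq> adom X"
  unfolding adom_def by auto

lemma sat_Exs_Atom:
  assumes "adom X \<subseteq> A"
  shows "sat X A \<sigma> (Exs v n (Atom R (Vars v n))) \<longleftrightarrow> (\<exists>vs. length vs = n \<and> (R, vs) \<in> X)"
proof -
  have "sat X A \<sigma> (Exs v n (Atom R (Vars v n))) \<longleftrightarrow> (\<exists>vs. length vs = n \<and> set vs \<subseteq> A \<and> (R, vs) \<in> X)"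
    by (simp add: sat_Exs map_eval_Vars cong: conj_cong)
  also have "\<dots> \<longleftrightarrow> (\<exists>vs. length vs = n \<and> (R, vs) \<in> X)" using assms set_subset_adom by blast
  finally show ?thesis .
qed

lemma sat_Alls_Impl_Atom:
  assumes "adom X \<subseteq> A"
  shows "sat X A \<sigma> (Alls v n (Impl (Atom Q (Vars v n)) \<psi>)) \<longleftrightarrow>
    (\<forall>vs. (Q, vs) \<in> X \<longrightarrow> length vs = n \<longrightarrow> sat X A (upd_block \<sigma> v vs) \<psi>)"
proof -
  have "sat X A \<sigma> (Alls v n (Impl (Atom Q (Vars v n)) \<psi>)) \<longleftrightarrow>
      (\<forall>vs. length vs = n \<longrightarrow> set vs \<subseteq> A \<longrightarrow> (Q, vs) \<in> X \<longrightarrow> sat X A (upd_block \<sigma> v vs) \<psi>)"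
    by (simp add: sat_Alls map_eval_Vars cong: imp_cong)
  also have "\<dots> \<longleftrightarrow> (\<forall>vs. (Q, vs) \<in> X \<longrightarrow> length vs = n \<longrightarrow> sat X A (upd_block \<sigma> v vs) \<psi>)"
    using assms set_subset_adom by blast
  finally show ?thesis .
qed

lemma sat_Exs_Conj_Atom:
  assumes "adom X \<subseteq> A"
  shows "sat X A \<sigma> (Exs v n (Conj (Atom Q (Vars v n)) \<psi>)) \<longleftrightarrow>
    (\<exists>vs. (Q, vs) \<in> X \<and> length vs = n \<and> sat X A (upd_block \<sigma> v vs) \<psi>)"
proof -
  have "sat X A \<sigma> (Exs v n (Conj (Atom Q (Vars v n)) \<psi>)) \<longleftrightarrow>
      (\<exists>vs. length vs = n \<and> set vs \<subseteq> A \<and> (Q, vs) \<in> X \<and> sat X A (upd_block \<sigma> v vs) \<psi>)"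
    by (simp add: sat_Exs map_eval_Vars cong: conj_cong)
  also have "\<dots> \<longleftrightarrow> (\<exists>vs. (Q, vs) \<in> X \<and> length vs = n \<and> sat X A (upd_block \<sigma> v vs) \<psi>)"
    using assms set_subset_adom by blast
  finally show ?thesis .
qed

definition list_of :: "'a set \<Rightarrow> 'a list" where
  "list_of A = (SOME xs. set xs = A \<and> distinct xs)"

lemma list_of: "finite A \<Longrightarrow> set (list_of A) = A \<and> distinct (list_of A)"
  unfolding list_of_def by (rule someI_ex) (rule finite_distinct_list)

lemma length_list_of: "finite A \<Longrightarrow> length (list_of A) = card A"
  using list_of distinct_card by metis

definition eq_consts :: "'u list \<Rightarrow> 'u fo" where
  "eq_consts as = Conjs (map (\<lambda>i. FEq (Var i) (Const (as ! i))) [0..<length as])"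

definition in_inst :: "'u inst \<Rightarrow> rel \<Rightarrow> 'u fo" where
  "in_inst D R = Disjs (map (\<lambda>f. eq_consts (snd f)) (filter (\<lambda>f. fst f = R) (list_of D)))"

lemma sat_eq_consts: "length as = length bs \<Longrightarrow> sat X A (\<lambda>i. as ! i) (eq_consts bs) \<longleftrightarrow> as = bs"
  by (auto simp: eq_consts_def sat_Conjs intro: nth_equalityI)

lemma sat_in_inst:
  assumes D: "instance_over S D" and len: "length as = arity R"
  shows "sat X A (\<lambda>i. as ! i) (in_inst D R) \<longleftrightarrow> (R, as) \<in> D"
proof -
  have fin: "finite D" and lenD: "\<And>bs. (R, bs) \<in> D \<Longrightarrow> length bs = arity R"
    using D by (auto simp: instance_over_def)
  have "sat X A (\<lambda>i. as ! i) (in_inst D R) \<longleftrightarrow>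
      (\<exists>f\<in>D. fst f = R \<and> sat X A (\<lambda>i. as ! i) (eq_consts (snd f)))"
    unfolding in_inst_def sat_Disjs set_map set_filter using list_of[OF fin] by blast
  also have "\<dots> \<longleftrightarrow> (\<exists>f\<in>D. fst f = R \<and> as = snd f)"
  proof (rule bex_cong[OF refl])
    fix f assume "f \<in> D"
    then have "fst f = R \<Longrightarrow> length (snd f) = arity R" using lenD[of "snd f"] by (cases f) auto
    then show "(fst f = R \<and> sat X A (\<lambda>i. as ! i) (eq_consts (snd f))) \<longleftrightarrow> (fst f = R \<and> as = snd f)"
      using sat_eq_consts[of as "snd f"] len by auto
  qed
  also have "\<dots> \<longleftrightarrow> (R, as) \<in> D" by force
  finally show ?thesis .
qed

lemma fv_in_inst:
  assumes D: "instance_over S D"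
  shows "fv (in_inst D R) \<subseteq> {..<arity R}"
proof
  have fin: "finite D" and lenD: "\<And>bs. (R, bs) \<in> D \<Longrightarrow> length bs = arity R"
    using D by (auto simp: instance_over_def)
  fix x assume "x \<in> fv (in_inst D R)"
  then obtain f where f: "f \<in> D" "fst f = R" "x \<in> fv (eq_consts (snd f))"
    unfolding in_inst_def fv_Disjs using list_of[OF fin] by auto
  then have "length (snd f) = arity R" using lenD[of "snd f"] by (cases f) auto
  then show "x \<in> {..<arity R}" using f(3) by (auto simp: eq_consts_def fv_Conjs)
qed

lemma rels_in_inst: "rels (in_inst D R) = {}"
  by (auto simp: in_inst_def rels_Disjs eq_consts_def rels_Conjs)

lemma fo_consts_in_inst:
  assumes D: "instance_over S D" and "(R, as) \<in> D"
  shows "set as \<subseteq> fo_consts (in_inst D R)"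
proof -
  have fin: "finite D" using D by (simp add: instance_over_def)
  have "set as \<subseteq> fo_consts (eq_consts as)"
  proof
    fix x assume "x \<in> set as"
    then obtain i where "i < length as" "as ! i = x" by (auto simp: in_set_conv_nth)
    then show "x \<in> fo_consts (eq_consts as)" unfolding eq_consts_def fo_consts_Conjs by force
  qed
  moreover have "eq_consts as \<in> set (map (\<lambda>f. eq_consts (snd f)) (filter (\<lambda>f. fst f = R) (list_of D)))"
    using assms(2) list_of[OF fin] by force
  ultimately show ?thesis unfolding in_inst_def fo_consts_Disjs by blast
qed

lemma view_apply_eqI:
  assumes sem: "\<And>R as. R \<in> S \<Longrightarrow> length as = arity R \<Longrightarrow> set as \<subseteq> adom X \<union> fo_consts (\<Phi> R) \<Longrightarrow>
        sat_adom X (\<Phi> R) as \<longleftrightarrow> (R, as) \<in> Out"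
    and out: "\<And>R as. (R, as) \<in> Out \<Longrightarrow> R \<in> S \<and> length as = arity R \<and> set as \<subseteq> adom X \<union> fo_consts (\<Phi> R)"
  shows "view_apply S \<Phi> X = Out"
proof (rule set_eqI)
  fix f :: "'a fact"
  obtain R as where f: "f = (R, as)" by (cases f)
  show "f \<in> view_apply S \<Phi> X \<longleftrightarrow> f \<in> Out"
    unfolding f view_apply_def using out[of R as] sem[of R as] by blast
qed

lemma countable_finite_instances:
  assumes "countable (UNIV :: 'u set)"
  shows "countable {D :: 'u inst. finite D}"
proof -
  have "countable (UNIV :: 'u list set)" using countable_lists[OF assms] by (simp add: lists_UNIV)
  then have "countable (UNIV :: 'u fact set)"
    using countable_SIGMA[of "UNIV :: rel set" "\<lambda>_. UNIV :: 'u list set"] by simp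
  then show ?thesis using countable_Collect_finite_subset[of "UNIV :: 'u fact set"] by simp
qed

locale world_family =
  fixes S :: "rel set" and DD :: "'u inst set"
  assumes schema: "schema S" and DD_nonempty: "DD \<noteq> {}"
    and DD_instances: "\<And>D. D \<in> DD \<Longrightarrow> instance_over S D" and countable_DD: "countable DD"
begin

text \<open>The empty world, if present, is taken as the default world, so that all indexed worlds
  are nonempty.\<close>

definition default_world :: "'u inst" where
  "default_world = (if {} \<in> DD then {} else (SOME D. D \<in> DD))"

definition coded :: "'u inst set" where
  "coded = DD - {default_world}"

definition ids :: "nat set" where
  "ids = to_nat_on coded ` coded"

definition world :: "nat \<Rightarrow> 'u inst" where
  "world i = from_nat_into coded i"

definition max_arity :: nat where
  "max_arity = Max (arity ` S)"

definition rel_list :: "rel list" where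
  "rel_list = list_of S"

lemma finite_S: "finite S" and S_nonempty: "S \<noteq> {}"
  using schema by (auto simp: schema_def)

lemma set_rel_list: "set rel_list = S"
  using list_of[OF finite_S] by (simp add: rel_list_def)

lemma arity_le_max_arity: "R \<in> S \<Longrightarrow> arity R \<le> max_arity"
  unfolding max_arity_def using finite_S by simp

lemma default_world_in: "default_world \<in> DD"
  using DD_nonempty by (auto simp: default_world_def intro: someI_ex)

lemma default_world_instance: "instance_over S default_world"
  using default_world_in DD_instances by blast

lemma countable_coded: "countable coded"
  using countable_DD by (simp add: coded_def)

lemma world_coded: "i \<in> ids \<Longrightarrow> world i \<in> coded"
  unfolding ids_def world_def using from_nat_into_to_nat_on[OF countable_coded] by auto

lemma world_in: "i \<in> ids \<Longrightarrow> world i \<in> DD"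
  using world_coded by (auto simp: coded_def)

lemma world_instance: "i \<in> ids \<Longrightarrow> instance_over S (world i)"
  using world_in DD_instances by blast

lemma finite_world: "i \<in> ids \<Longrightarrow> finite (world i)"
  using world_instance by (simp add: instance_over_def)

lemma world_nonempty: "i \<in> ids \<Longrightarrow> world i \<noteq> {}"
  using world_coded[of i] unfolding coded_def default_world_def by (cases "{} \<in> DD") auto

lemma world_surj: "D \<in> coded \<Longrightarrow> \<exists>i\<in>ids. world i = D"
  unfolding ids_def world_def using from_nat_into_to_nat_on[OF countable_coded] by auto

lemma world_inj: "i \<in> ids \<Longrightarrow> i' \<in> ids \<Longrightarrow> world i = world i' \<Longrightarrow> i = i'"
  unfolding ids_def world_def using from_nat_into_to_nat_on[OF countable_coded] by auto

end

section \<open>Encoding worlds by cycles\<close>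

lemma Suc_mod_closed_eq_lessThan:
  assumes j0: "j0 \<in> J" and J: "J \<subseteq> {..<k}" and closed: "\<And>j. j \<in> J \<Longrightarrow> Suc j mod k \<in> J"
  shows "J = {..<k}"
proof -
  have j0k: "j0 < k" using j0 J by auto
  have reach: "(j0 + i) mod k \<in> J" for i
  proof (induction i)
    case 0 then show ?case using j0 j0k by simp
  next
    case (Suc i) then show ?case using closed[OF Suc] by (simp add: mod_Suc_eq)
  qed
  have "j \<in> J" if "j < k" for j
    using reach[of "k - j0 + j"] j0k that by simp
  then show ?thesis using J by auto
qed

definition cycle_rel :: "rel \<Rightarrow> rel" where
  "cycle_rel R = (fst R, snd R + 3)"

lemma cycle_rel_inj: "cycle_rel R = cycle_rel R' \<Longrightarrow> R = R'"
  by (cases R; cases R') (auto simp: cycle_rel_def)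

lemma arity_cycle_rel: "arity (cycle_rel R) = 3 + arity R"
  by (simp add: cycle_rel_def arity_def)

text \<open>World \<open>i\<close> with facts \<open>R\<^sub>j(as\<^sub>j)\<close>, \<open>j < k\<close>, is encoded by the \<open>k\<close> facts
  \<open>cycle_rel R\<^sub>j (key i, node i j, node i ((j + 1) mod k), as\<^sub>j)\<close>: a directed cycle of fresh
  nodes whose edges all carry the key of the world. A first-order sentence recognises that the
  present facts form exactly one such cycle, since a nonempty set of edges of one cycle that is
  closed under successors is the whole cycle.\<close>

locale cycle_encoding = world_family S DD for S :: "rel set" and DD :: "'u inst set" +
  fixes \<nu> :: "nat \<Rightarrow> 'u"
  assumes inj_\<nu>: "inj \<nu>"
begin

definition world_facts :: "nat \<Rightarrow> 'u fact list" where
  "world_facts i = list_of (world i)"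

definition world_size :: "nat \<Rightarrow> nat" where
  "world_size i = card (world i)"

definition key :: "nat \<Rightarrow> 'u" where
  "key i = \<nu> (prod_encode (i, 0))"

definition node :: "nat \<Rightarrow> nat \<Rightarrow> 'u" where
  "node i j = \<nu> (prod_encode (i, Suc j))"

definition cycle_fact :: "nat \<Rightarrow> nat \<Rightarrow> 'u fact" where
  "cycle_fact i j = (cycle_rel (fst (world_facts i ! j)),
     [key i, node i j, node i (Suc j mod world_size i)] @ snd (world_facts i ! j))"

definition valid_code :: "nat \<Rightarrow> bool" where
  "valid_code n \<longleftrightarrow> fst (prod_decode n) \<in> ids \<and> snd (prod_decode n) < world_size (fst (prod_decode n))"

definition code_fact :: "nat \<Rightarrow> 'u fact" where
  "code_fact n = cycle_fact (fst (prod_decode n)) (snd (prod_decode n))"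

definition block :: "nat \<Rightarrow> nat set" where
  "block i = {prod_encode (i, j) |j. j < world_size i}"

definition decode :: "nat set \<Rightarrow> 'u inst" where
  "decode U = (if \<exists>i\<in>ids. U = block i then world (SOME i. i \<in> ids \<and> U = block i) else default_world)"

definition code_odds :: "nat \<Rightarrow> real" where
  "code_odds n = (if valid_code n then (1/2) ^ n else 0)"

lemma world_size_pos: "i \<in> ids \<Longrightarrow> 0 < world_size i"
  using finite_world world_nonempty by (simp add: world_size_def card_gt_0_iff)

lemma world_facts: "i \<in> ids \<Longrightarrow> set (world_facts i) = world i \<and> length (world_facts i) = world_size i"
  using list_of[OF finite_world] length_list_of[OF finite_world] by (simp add: world_facts_def world_size_def)

lemma world_facts_nth:
  assumes "i \<in> ids" "j < world_size i"
  shows "world_facts i ! j \<in> world i" "fst (world_facts i ! j) \<in> S"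
    "length (snd (world_facts i ! j)) = arity (fst (world_facts i ! j))"
proof -
  show *: "world_facts i ! j \<in> world i" using world_facts assms by (metis nth_mem)
  then show "fst (world_facts i ! j) \<in> S" "length (snd (world_facts i ! j)) = arity (fst (world_facts i ! j))"
    using world_instance[OF assms(1)] unfolding instance_over_def by (auto simp: case_prod_beta)
qed

lemma key_inj: "key i = key i' \<Longrightarrow> i = i'"
  using inj_\<nu> by (auto simp: key_def dest: injD)

lemma node_inj: "node i j = node i' j' \<Longrightarrow> i = i' \<and> j = j'"
  using inj_\<nu> by (auto simp: node_def dest: injD)

lemma valid_code_encode: "valid_code (prod_encode (i, j)) \<longleftrightarrow> i \<in> ids \<and> j < world_size i"
  by (simp add: valid_code_def)

lemma code_fact_encode: "code_fact (prod_encode (i, j)) = cycle_fact i j"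
  by (simp add: code_fact_def)

lemma valid_codeE:
  assumes "valid_code n"
  obtains i j where "n = prod_encode (i, j)" "i \<in> ids" "j < world_size i"
  by (metis assms prod.collapse prod_decode_inverse valid_code_def)

lemma inj_on_code_fact: "inj_on code_fact {n. valid_code n}"
proof (rule inj_onI)
  fix n n' assume "n \<in> {n. valid_code n}" "n' \<in> {n. valid_code n}" and eq: "code_fact n = code_fact n'"
  then obtain i j i' j' where "n = prod_encode (i, j)" "n' = prod_encode (i', j')"
    by (auto elim!: valid_codeE)
  moreover have "cycle_fact i j = cycle_fact i' j' \<Longrightarrow> i = i' \<and> j = j'"
    unfolding cycle_fact_def using key_inj node_inj by auto
  ultimately show "n = n'" using eq by (auto simp: code_fact_encode)
qed

lemma block_eq_image: "block i = (\<lambda>j. prod_encode (i, j)) ` {..<world_size i}"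
  by (auto simp: block_def)

lemma block_facts: "code_fact ` block i = cycle_fact i ` {..<world_size i}"
  by (simp add: block_eq_image image_image code_fact_encode)

definition well_formed :: "'u inst \<Rightarrow> bool" where
  "well_formed X \<longleftrightarrow> (\<forall>f\<in>X. \<exists>R\<in>S. fst f = cycle_rel R \<and> length (snd f) = 3 + arity R)"

lemma well_formedE:
  assumes "well_formed X" "f \<in> X"
  obtains R vs where "f = (cycle_rel R, vs)" "R \<in> S" "length vs = 3 + arity R"
  using assms unfolding well_formed_def by (metis prod.collapse)

lemma well_formed_code_facts:
  assumes "\<And>n. n \<in> U \<Longrightarrow> valid_code n"
  shows "well_formed (code_fact ` U)"
  unfolding well_formed_def
proof
  fix f assume "f \<in> code_fact ` U"
  then obtain n where n: "n \<in> U" "f = code_fact n" by auto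
  from assms[OF n(1)] obtain i j where "n = prod_encode (i, j)" "i \<in> ids" "j < world_size i"
    by (rule valid_codeE)
  then show "\<exists>R\<in>S. fst f = cycle_rel R \<and> length (snd f) = 3 + arity R"
    using n world_facts_nth[of i j] by (auto simp: code_fact_encode cycle_fact_def)
qed

definition closed_cycle :: "'u inst \<Rightarrow> bool" where
  "closed_cycle X \<longleftrightarrow> X \<noteq> {} \<and> (\<forall>f1\<in>X. \<forall>f2\<in>X. snd f1 ! 0 = snd f2 ! 0)
     \<and> (\<forall>f1\<in>X. \<exists>f2\<in>X. snd f2 ! 1 = snd f1 ! 2)"

lemma closed_cycle_block:
  assumes i: "i \<in> ids"
  shows "closed_cycle (code_fact ` block i)"
proof -
  let ?X = "cycle_fact i ` {..<world_size i}"
  have "?X \<noteq> {}" using world_size_pos[OF i] by auto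
  moreover have "snd f ! 0 = key i" if "f \<in> ?X" for f using that by (auto simp: cycle_fact_def)
  moreover have "\<exists>f2\<in>?X. snd f2 ! 1 = snd f1 ! 2" if "f1 \<in> ?X" for f1
  proof -
    obtain j where j: "j < world_size i" "f1 = cycle_fact i j" using \<open>f1 \<in> ?X\<close> by auto
    have "cycle_fact i (Suc j mod world_size i) \<in> ?X" using world_size_pos[OF i] by simp
    moreover have "snd (cycle_fact i (Suc j mod world_size i)) ! 1 = snd f1 ! 2"
      using j by (simp add: cycle_fact_def)
    ultimately show ?thesis by blast
  qed
  ultimately show ?thesis unfolding closed_cycle_def block_facts by auto
qed

lemma closed_cycle_imp_block:
  assumes valid: "\<And>n. n \<in> U \<Longrightarrow> valid_code n" and closed: "closed_cycle (code_fact ` U)"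
  shows "\<exists>i\<in>ids. U = block i"
proof -
  obtain n0 where n0: "n0 \<in> U" using closed by (auto simp: closed_cycle_def)
  from valid[OF n0] obtain i j0 where ij0: "n0 = prod_encode (i, j0)" "i \<in> ids" "j0 < world_size i"
    by (rule valid_codeE)
  have in_block: "\<exists>j. n = prod_encode (i, j) \<and> j < world_size i" if nU: "n \<in> U" for n
  proof -
    from valid[OF nU] obtain i' j where ij: "n = prod_encode (i', j)" "i' \<in> ids" "j < world_size i'"
      by (rule valid_codeE)
    have "snd (code_fact n) ! 0 = snd (code_fact n0) ! 0"
      using closed nU n0 unfolding closed_cycle_def by blast
    then have "i' = i" using ij ij0 key_inj by (simp add: code_fact_encode cycle_fact_def)
    then show ?thesis using ij by auto
  qed
  define J where "J = {j. prod_encode (i, j) \<in> U}"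
  have step: "Suc j mod world_size i \<in> J" if jJ: "j \<in> J" for j
  proof -
    have "\<forall>f1\<in>code_fact ` U. \<exists>f2\<in>code_fact ` U. snd f2 ! 1 = snd f1 ! 2"
      using closed by (simp add: closed_cycle_def)
    then obtain f2 where f2: "f2 \<in> code_fact ` U" "snd f2 ! 1 = snd (code_fact (prod_encode (i, j))) ! 2"
      using jJ unfolding J_def by blast
    then obtain n2 where n2: "n2 \<in> U" "f2 = code_fact n2" by blast
    then obtain j2 where j2: "n2 = prod_encode (i, j2)" using in_block by blast
    have "node i j2 = node i (Suc j mod world_size i)"
      using f2(2) n2 j2 by (simp add: code_fact_encode cycle_fact_def)
    then show ?thesis using node_inj n2 j2 by (auto simp: J_def)
  qed
  have "J \<subseteq> {..<world_size i}"
  proof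
    fix j assume "j \<in> J"
    then obtain j' where "prod_encode (i, j) = prod_encode (i, j')" "j' < world_size i"
      using in_block unfolding J_def by blast
    then show "j \<in> {..<world_size i}" by (simp add: prod_encode_eq)
  qed
  then have "J = {..<world_size i}"
    using step n0 ij0 by (intro Suc_mod_closed_eq_lessThan[of j0]) (auto simp: J_def)
  then have "block i \<subseteq> U" by (auto simp: block_def J_def)
  moreover have "U \<subseteq> block i" using in_block by (auto simp: block_def)
  ultimately show ?thesis using ij0 by blast
qed

lemma decode_block: "i \<in> ids \<Longrightarrow> decode (block i) = world i"
proof -
  assume i: "i \<in> ids"
  have "i' = i" if "block i = block i'" for i'
  proof -
    have "prod_encode (i, 0) \<in> block i" using world_size_pos[OF i] by (auto simp: block_def)
    then have "prod_encode (i, 0) \<in> block i'" using that by simp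
    then show "i' = i" by (auto simp: block_def)
  qed
  then have "(SOME i'. i' \<in> ids \<and> block i = block i') = i"
    using i by (intro some_equality) auto
  then show ?thesis using i by (auto simp: decode_def)
qed

lemma decode_default: "\<not> (\<exists>i\<in>ids. U = block i) \<Longrightarrow> decode U = default_world"
  by (simp add: decode_def)

lemma decode_in: "decode U \<in> DD"
proof (cases "\<exists>i\<in>ids. U = block i")
  case True
  then have "(SOME i. i \<in> ids \<and> U = block i) \<in> ids" by (metis (mono_tags, lifting) someI_ex)
  then show ?thesis using True world_in by (simp add: decode_def)
qed (simp add: decode_def default_world_in)

sublocale summable_odds code_odds
proof
  show "0 \<le> code_odds n" for n by (simp add: code_odds_def)
  show "summable code_odds"
    by (rule summable_comparison_test'[OF summable_geometric[of "1/2 :: real"]]) (auto simp: code_odds_def)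
qed

lemma set_pmf_odds_set_code:
  assumes "U \<in> set_pmf (odds_set code_odds)"
  shows "finite U" "\<And>n. n \<in> U \<Longrightarrow> valid_code n"
proof -
  show "finite U" by (rule set_pmf_odds_set(1)[OF assms])
  fix n assume "n \<in> U"
  then have "0 < code_odds n" by (rule set_pmf_odds_set(2)[OF assms])
  then show "valid_code n" by (simp add: code_odds_def split: if_splits)
qed

lemma block_in_set_pmf:
  assumes "i \<in> ids"
  shows "block i \<in> set_pmf (odds_set code_odds)"
proof -
  have "0 < code_odds n" if "n \<in> block i" for n
    using that assms by (auto simp: block_def valid_code_encode code_odds_def)
  then have "0 < pmf (odds_set code_odds) (block i)"
    by (intro odds_set_pos) (simp_all add: block_eq_image)
  then show ?thesis by (simp add: set_pmf_iff)
qed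

end

context cycle_encoding
begin

text \<open>In the view formulas the output variables are \<open>0, \<dots>, arity R - 1\<close>; the two blocks of
  variables bound to (the arguments of) facts of the input start at \<open>max_arity\<close> and \<open>var2\<close>, above
  the output variables and the first block respectively.\<close>

definition var2 :: nat where
  "var2 = 2 * max_arity + 3"

definition cycle_atom :: "nat \<Rightarrow> rel \<Rightarrow> 'u fo" where
  "cycle_atom v R = Atom (cycle_rel R) (Vars v (3 + arity R))"

definition Nonempty_fm :: "'u fo" where
  "Nonempty_fm = Disjs (map (\<lambda>R. Exs max_arity (3 + arity R) (cycle_atom max_arity R)) rel_list)"

definition Same_key_fm :: "'u fo" where
  "Same_key_fm = Conjs (map (\<lambda>R1. Alls max_arity (3 + arity R1) (Impl (cycle_atom max_arity R1)
     (Conjs (map (\<lambda>R2. Alls var2 (3 + arity R2) (Impl (cycle_atom var2 R2)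
        (FEq (Var max_arity) (Var var2)))) rel_list)))) rel_list)"

definition Closed_fm :: "'u fo" where
  "Closed_fm = Conjs (map (\<lambda>R1. Alls max_arity (3 + arity R1) (Impl (cycle_atom max_arity R1)
     (Disjs (map (\<lambda>R2. Exs var2 (3 + arity R2) (Conj (cycle_atom var2 R2)
        (FEq (Var (var2 + 1)) (Var (max_arity + 2))))) rel_list)))) rel_list)"

definition Cycle_fm :: "'u fo" where
  "Cycle_fm = Conj Nonempty_fm (Conj Same_key_fm Closed_fm)"

definition Decode_fm :: "rel \<Rightarrow> 'u fo" where
  "Decode_fm R = Exs max_arity 3 (Atom (cycle_rel R) (Vars max_arity 3 @ Vars 0 (arity R)))"

definition cycle_view :: "rel \<Rightarrow> 'u fo" where
  "cycle_view R = Disj (Conj Cycle_fm (Decode_fm R)) (Conj (Neg Cycle_fm) (in_inst default_world R))"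

lemma all_facts_iff:
  assumes "well_formed X"
  shows "(\<forall>R\<in>S. \<forall>vs. (cycle_rel R, vs) \<in> X \<longrightarrow> length vs = 3 + arity R \<longrightarrow> P vs) \<longleftrightarrow> (\<forall>f\<in>X. P (snd f))"
proof
  assume H: "\<forall>R\<in>S. \<forall>vs. (cycle_rel R, vs) \<in> X \<longrightarrow> length vs = 3 + arity R \<longrightarrow> P vs"
  show "\<forall>f\<in>X. P (snd f)"
  proof
    fix f assume "f \<in> X"
    with assms obtain R vs where "f = (cycle_rel R, vs)" "R \<in> S" "length vs = 3 + arity R"
      by (rule well_formedE)
    then show "P (snd f)" using H \<open>f \<in> X\<close> by auto
  qed
qed auto

lemma ex_facts_iff:
  assumes "well_formed X"
  shows "(\<exists>R\<in>S. \<exists>vs. (cycle_rel R, vs) \<in> X \<and> length vs = 3 + arity R \<and> P vs) \<longleftrightarrow> (\<exists>f\<in>X. P (snd f))"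
  using all_facts_iff[OF assms, of "\<lambda>vs. \<not> P vs"] by blast

lemma fact_length_bounds:
  assumes "well_formed X" "f \<in> X"
  shows "3 \<le> length (snd f)" "max_arity + length (snd f) \<le> var2"
  using assms arity_le_max_arity by (auto elim!: well_formedE simp: var2_def)

lemma eval_first_block:
  "i < length vs \<Longrightarrow> max_arity + length vs \<le> var2 \<Longrightarrow>
    upd_block (upd_block \<sigma> max_arity vs) var2 ws (max_arity + i) = vs ! i"
  by (simp add: upd_block_below upd_block_nth)

context
  fixes X :: "'u inst" and A :: "'u set" and \<sigma> :: "nat \<Rightarrow> 'u"
  assumes wf: "well_formed X" and A: "adom X \<subseteq> A"
begin

lemma sat_Nonempty_fm: "sat X A \<sigma> Nonempty_fm \<longleftrightarrow> X \<noteq> {}"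
proof -
  have "sat X A \<sigma> Nonempty_fm \<longleftrightarrow> (\<exists>R\<in>S. \<exists>vs. (cycle_rel R, vs) \<in> X \<and> length vs = 3 + arity R \<and> True)"
    unfolding Nonempty_fm_def sat_Disjs cycle_atom_def set_map set_rel_list using sat_Exs_Atom[OF A] by auto
  then show ?thesis unfolding ex_facts_iff[OF wf] by auto
qed

lemma sat_Same_key_fm: "sat X A \<sigma> Same_key_fm \<longleftrightarrow> (\<forall>f1\<in>X. \<forall>f2\<in>X. snd f1 ! 0 = snd f2 ! 0)"
proof -
  have first: "upd_block (upd_block \<sigma> max_arity (snd f1)) var2 ws max_arity = snd f1 ! 0"
    if "f1 \<in> X" for f1 ws
  proof -
    have "0 < length (snd f1)" "max_arity + length (snd f1) \<le> var2"
      using fact_length_bounds[OF wf that] by linarith+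
    then show ?thesis using eval_first_block[of 0 "snd f1" \<sigma> ws] by simp
  qed
  have second: "upd_block \<sigma>' var2 (snd f2) var2 = snd f2 ! 0" if "f2 \<in> X" for f2 \<sigma>'
  proof -
    have "0 < length (snd f2)" using fact_length_bounds(1)[OF wf that] by linarith
    then show ?thesis using upd_block_nth[of 0 "snd f2" \<sigma>' var2] by simp
  qed
  have "sat X A \<sigma> Same_key_fm \<longleftrightarrow> (\<forall>f1\<in>X. \<forall>f2\<in>X.
      upd_block (upd_block \<sigma> max_arity (snd f1)) var2 (snd f2) max_arity =
      upd_block (upd_block \<sigma> max_arity (snd f1)) var2 (snd f2) var2)"
    by (simp add: Same_key_fm_def sat_Conjs set_rel_list cycle_atom_def sat_Alls_Impl_Atom[OF A]
        all_facts_iff[OF wf])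
  also have "\<dots> \<longleftrightarrow> (\<forall>f1\<in>X. \<forall>f2\<in>X. snd f1 ! 0 = snd f2 ! 0)"
    by (simp add: first second)
  finally show ?thesis .
qed

lemma sat_Closed_fm: "sat X A \<sigma> Closed_fm \<longleftrightarrow> (\<forall>f1\<in>X. \<exists>f2\<in>X. snd f2 ! 1 = snd f1 ! 2)"
proof -
  have first: "upd_block (upd_block \<sigma> max_arity (snd f1)) var2 ws (max_arity + 2) = snd f1 ! 2"
    if "f1 \<in> X" for f1 ws
  proof -
    have "2 < length (snd f1)" "max_arity + length (snd f1) \<le> var2"
      using fact_length_bounds[OF wf that] by linarith+
    then show ?thesis using eval_first_block[of 2 "snd f1" \<sigma> ws] by simp
  qed
  have second: "upd_block \<sigma>' var2 (snd f2) (var2 + 1) = snd f2 ! 1" if "f2 \<in> X" for f2 \<sigma>'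
  proof -
    have "1 < length (snd f2)" using fact_length_bounds(1)[OF wf that] by linarith
    then show ?thesis using upd_block_nth[of 1 "snd f2" \<sigma>' var2] by simp
  qed
  have "sat X A \<sigma> Closed_fm \<longleftrightarrow> (\<forall>f1\<in>X. \<exists>f2\<in>X.
      upd_block (upd_block \<sigma> max_arity (snd f1)) var2 (snd f2) (var2 + 1) =
      upd_block (upd_block \<sigma> max_arity (snd f1)) var2 (snd f2) (max_arity + 2))"
    by (simp add: Closed_fm_def sat_Conjs sat_Disjs set_rel_list cycle_atom_def sat_Alls_Impl_Atom[OF A]
        sat_Exs_Conj_Atom[OF A] all_facts_iff[OF wf] ex_facts_iff[OF wf] del: One_nat_def)
  also have "\<dots> \<longleftrightarrow> (\<forall>f1\<in>X. \<exists>f2\<in>X. snd f2 ! 1 = snd f1 ! 2)"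
  proof (intro ball_cong bex_cong refl)
    fix f1 f2 assume "f1 \<in> X" "f2 \<in> X"
    then show "upd_block (upd_block \<sigma> max_arity (snd f1)) var2 (snd f2) (var2 + 1) =
        upd_block (upd_block \<sigma> max_arity (snd f1)) var2 (snd f2) (max_arity + 2) \<longleftrightarrow>
        snd f2 ! 1 = snd f1 ! 2"
      using first second by metis
  qed
  finally show ?thesis .
qed

lemma sat_Cycle_fm: "sat X A \<sigma> Cycle_fm \<longleftrightarrow> closed_cycle X"
  by (simp add: Cycle_fm_def closed_cycle_def sat_Nonempty_fm sat_Same_key_fm sat_Closed_fm)

end

lemma sat_Decode_fm:
  assumes A: "adom X \<subseteq> A" and R: "R \<in> S" and len: "length as = arity R"
  shows "sat X A (\<lambda>i. as ! i) (Decode_fm R) \<longleftrightarrow> (\<exists>ws. length ws = 3 \<and> (cycle_rel R, ws @ as) \<in> X)"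
proof -
  have "map (eval_trm (upd_block (\<lambda>i. as ! i) max_arity ws)) (Vars 0 (arity R)) = as" for ws
    using arity_le_max_arity[OF R] len by (auto simp: Vars_def upd_block_below intro!: nth_equalityI)
  then have "sat X A (\<lambda>i. as ! i) (Decode_fm R) \<longleftrightarrow>
      (\<exists>ws. length ws = 3 \<and> set ws \<subseteq> A \<and> (cycle_rel R, ws @ as) \<in> X)"
    unfolding Decode_fm_def sat_Exs sat.simps by (simp add: map_eval_Vars cong: conj_cong)
  also have "\<dots> \<longleftrightarrow> (\<exists>ws. length ws = 3 \<and> (cycle_rel R, ws @ as) \<in> X)"
  proof
    assume "\<exists>ws. length ws = 3 \<and> (cycle_rel R, ws @ as) \<in> X"
    then obtain ws where ws: "length ws = 3" "(cycle_rel R, ws @ as) \<in> X" by blast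
    then have "set ws \<subseteq> A" using set_subset_adom[OF ws(2)] A by auto
    then show "\<exists>ws. length ws = 3 \<and> set ws \<subseteq> A \<and> (cycle_rel R, ws @ as) \<in> X" using ws by blast
  qed blast
  finally show ?thesis .
qed

lemma decode_fm_block:
  assumes i: "i \<in> ids"
  shows "(\<exists>ws. length ws = 3 \<and> (cycle_rel R, ws @ as) \<in> code_fact ` block i) \<longleftrightarrow> (R, as) \<in> world i"
proof -
  have "(\<exists>ws. length ws = 3 \<and> (cycle_rel R, ws @ as) = cycle_fact i j) \<longleftrightarrow> world_facts i ! j = (R, as)"
    if "j < world_size i" for j
  proof -
    obtain R' as' where f: "world_facts i ! j = (R', as')" by fastforce
    let ?ns = "[key i, node i j, node i (Suc j mod world_size i)]"
    have "(\<exists>ws. length ws = 3 \<and> (cycle_rel R, ws @ as) = cycle_fact i j) \<longleftrightarrow> R = R' \<and> as = as'"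
    proof
      assume "\<exists>ws. length ws = 3 \<and> (cycle_rel R, ws @ as) = cycle_fact i j"
      then obtain ws where "length ws = 3" "cycle_rel R = cycle_rel R'" "ws @ as = ?ns @ as'"
        unfolding cycle_fact_def f by auto
      then show "R = R' \<and> as = as'"
        using cycle_rel_inj append_eq_append_conv[of ws ?ns as as'] by simp
    next
      assume "R = R' \<and> as = as'"
      then show "\<exists>ws. length ws = 3 \<and> (cycle_rel R, ws @ as) = cycle_fact i j"
        unfolding cycle_fact_def f by (intro exI[of _ ?ns]) simp
    qed
    then show ?thesis using f by auto
  qed
  moreover have "(R, as) \<in> world i \<longleftrightarrow> (\<exists>j<world_size i. world_facts i ! j = (R, as))"
    using world_facts[OF i] by (metis in_set_conv_nth)
  ultimately show ?thesis unfolding block_facts by blast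
qed

lemma decode_fact_range:
  assumes out: "(R, as) \<in> decode U"
  shows "R \<in> S \<and> length as = arity R \<and> set as \<subseteq> adom (code_fact ` U) \<union> fo_consts (cycle_view R)"
proof (cases "\<exists>i\<in>ids. U = block i")
  case True
  then obtain i where i: "i \<in> ids" "U = block i" by blast
  then have w: "(R, as) \<in> world i" using out decode_block by simp
  then have "R \<in> S" "length as = arity R" using world_instance[OF i(1)] by (auto simp: instance_over_def)
  moreover obtain ws where "(cycle_rel R, ws @ as) \<in> code_fact ` U"
    using decode_fm_block[OF i(1), of R as] w i(2) by blast
  then have "set as \<subseteq> adom (code_fact ` U)" using set_subset_adom by (metis le_supE set_append)
  ultimately show ?thesis by blast
next
  case False
  then have D: "(R, as) \<in> default_world" using out decode_default by simp
  then have "set as \<subseteq> fo_consts (cycle_view R)"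
    using fo_consts_in_inst[OF default_world_instance D] by (auto simp: cycle_view_def)
  then show ?thesis using D default_world_instance by (auto simp: instance_over_def)
qed

lemma view_apply_cycle_view:
  assumes U: "finite U" "\<And>n. n \<in> U \<Longrightarrow> valid_code n"
  shows "view_apply S cycle_view (code_fact ` U) = decode U"
proof (rule view_apply_eqI)
  let ?X = "code_fact ` U"
  have wf: "well_formed ?X" using well_formed_code_facts U by blast
  fix R :: rel and as :: "'u list" assume R: "R \<in> S" and len: "length as = arity R"
  define A where "A = adom ?X \<union> fo_consts (cycle_view R)"
  have A: "adom ?X \<subseteq> A" by (simp add: A_def)
  have "sat_adom ?X (cycle_view R) as \<longleftrightarrow> sat ?X A (\<lambda>i. as ! i) (cycle_view R)"
    by (simp add: sat_adom_def A_def)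
  also have "\<dots> \<longleftrightarrow> closed_cycle ?X \<and> (\<exists>ws. length ws = 3 \<and> (cycle_rel R, ws @ as) \<in> ?X)
      \<or> \<not> closed_cycle ?X \<and> (R, as) \<in> default_world"
    unfolding cycle_view_def sat.simps sat_Cycle_fm[OF wf A] sat_Decode_fm[OF A R len]
      sat_in_inst[OF default_world_instance len] ..
  also have "\<dots> \<longleftrightarrow> (R, as) \<in> decode U"
  proof (cases "closed_cycle ?X")
    case True
    then obtain i where i: "i \<in> ids" "U = block i" using closed_cycle_imp_block U by blast
    then show ?thesis using True decode_fm_block[OF i(1)] decode_block[OF i(1)] by simp
  next
    case False
    then have "\<not> (\<exists>i\<in>ids. U = block i)" by (metis closed_cycle_block)
    then have "decode U = default_world" by (rule decode_default)
    then show ?thesis using False by simp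
  qed
  finally show "sat_adom ?X (cycle_view R) as \<longleftrightarrow> (R, as) \<in> decode U" .
qed (rule decode_fact_range)

lemma fo_view_cycle_view: "fo_view (cycle_rel ` S) S cycle_view"
  unfolding fo_view_def
proof (intro conjI ballI)
  show "schema (cycle_rel ` S)" using finite_S S_nonempty by (simp add: schema_def)
  show "schema S" by (rule schema)
  fix R assume R: "R \<in> S"
  have "fv Cycle_fm = {}"
    by (auto simp: Cycle_fm_def Nonempty_fm_def Same_key_fm_def Closed_fm_def cycle_atom_def
        fv_Conjs fv_Disjs fv_Alls fv_Exs Vars_def var2_def)
  moreover have "fv (Decode_fm R) \<subseteq> {..<arity R}"
    using arity_le_max_arity[OF R] by (auto simp: Decode_fm_def fv_Exs Vars_def)
  ultimately show "fv (cycle_view R) \<subseteq> {..<arity R}"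
    using fv_in_inst[OF default_world_instance, of R] by (auto simp: cycle_view_def)
  show "rels (cycle_view R) \<subseteq> cycle_rel ` S"
    using R by (auto simp: cycle_view_def Cycle_fm_def Nonempty_fm_def Same_key_fm_def Closed_fm_def
        Decode_fm_def cycle_atom_def rels_Conjs rels_Disjs rels_Alls rels_Exs rels_in_inst set_rel_list)
qed

lemma pdb_code_facts: "pdb (cycle_rel ` S) (map_pmf ((`) code_fact) (odds_set code_odds))"
  unfolding pdb_def
proof (intro conjI ballI)
  show "schema (cycle_rel ` S)" using finite_S S_nonempty by (simp add: schema_def)
  fix X assume "X \<in> set_pmf (map_pmf ((`) code_fact) (odds_set code_odds))"
  then obtain U where U: "U \<in> set_pmf (odds_set code_odds)" "X = code_fact ` U" by auto
  have wf: "well_formed X" using set_pmf_odds_set_code(2)[OF U(1)] well_formed_code_facts U(2) by blast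
  show "instance_over (cycle_rel ` S) X"
    unfolding instance_over_def
  proof (intro conjI ballI)
    show "finite X" using set_pmf_odds_set_code(1)[OF U(1)] U(2) by simp
    fix f assume "f \<in> X"
    with wf obtain R vs where "f = (cycle_rel R, vs)" "R \<in> S" "length vs = 3 + arity R"
      by (rule well_formedE)
    then show "case f of (R', as) \<Rightarrow> R' \<in> cycle_rel ` S \<and> length as = arity R'"
      by (simp add: arity_cycle_rel)
  qed
qed

theorem exists_FO_TI_with_worlds: "\<exists>P. pdb S P \<and> worlds P = DD \<and> in_FO_TI S P"
proof (intro exI conjI)
  let ?I = "map_pmf ((`) code_fact) (odds_set code_odds)"
  let ?P = "map_pmf decode (odds_set code_odds)"
  have "?P = map_pmf (view_apply S cycle_view) ?I"
    unfolding map_pmf_comp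
    by (rule map_pmf_cong[OF refl]) (use set_pmf_odds_set_code view_apply_cycle_view in auto)
  moreover have "tuple_independent ?I"
    unfolding tuple_independent_iff_indep_elems
    by (rule indep_elems_image[OF indep_elems_odds_set _ inj_on_code_fact])
      (use set_pmf_odds_set_code in auto)
  ultimately show "in_FO_TI S ?P"
    unfolding in_FO_TI_def using pdb_code_facts fo_view_cycle_view by blast
  have "DD \<subseteq> set_pmf ?P"
  proof
    fix D assume D: "D \<in> DD"
    show "D \<in> set_pmf ?P"
    proof (cases "D = default_world")
      case True
      have "decode {} = default_world" using world_size_pos by (intro decode_default) (auto simp: block_def)
      moreover have "{} \<in> set_pmf (odds_set code_odds)"
        using odds_set_pos[of "{}"] by (simp add: set_pmf_iff)
      ultimately show ?thesis using True by (metis set_map_pmf image_eqI)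
    next
      case False
      then obtain i where i: "i \<in> ids" "world i = D"
        using world_surj[of D] D by (auto simp: coded_def)
      then show ?thesis using block_in_set_pmf[OF i(1)] decode_block[OF i(1)] by (metis set_map_pmf image_eqI)
    qed
  qed
  then show "worlds ?P = DD" using decode_in by (auto simp: worlds_def)
  then show "pdb S ?P" using schema DD_instances by (simp add: pdb_def worlds_def)
qed

end

section \<open>Encoding worlds of bounded size in layers\<close>

text \<open>With sizes bounded by \<open>c\<close>, a world is encoded as a single tuple of \<open>c\<close> slots of width
  \<open>max_arity + 1\<close>: slot \<open>j\<close> holds the tag of the relation of the \<open>j\<close>-th fact followed by its
  arguments, and padding fills the rest. Layer \<open>k\<close> of the input is an independent copy of the
  random set \<open>odds_set world_odds\<close>, so that a layer is the singleton \<open>{i}\<close> with probability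
  proportional to \<open>P(world i)\<close>. The view outputs the world in the highest singleton layer, and the
  default world if there is none or if the switch fact is present.\<close>

primrec layered :: "nat \<Rightarrow> nat set pmf \<Rightarrow> (nat \<times> nat) set pmf" where
  "layered 0 \<Lambda> = return_pmf {}"
| "layered (Suc k) \<Lambda> = union_pmf (map_pmf ((`) (Pair k)) \<Lambda>) (layered k \<Lambda>)"

definition layer :: "nat \<Rightarrow> (nat \<times> nat) set \<Rightarrow> nat set" where
  "layer k U = {n. (k, n) \<in> U}"

lemma set_pmf_layered:
  "Y \<in> set_pmf (layered k \<Lambda>) \<Longrightarrow> Y \<subseteq> {..<k} \<times> UNIV \<and> (\<forall>j<k. layer j Y \<in> set_pmf \<Lambda>)"
proof (induction k arbitrary: Y)
  case (Suc k)
  then obtain X Y' where Y: "Y = Pair k ` X \<union> Y'" "X \<in> set_pmf \<Lambda>" "Y' \<in> set_pmf (layered k \<Lambda>)"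
    by (auto simp: set_pmf_union_pmf)
  have IH: "Y' \<subseteq> {..<k} \<times> UNIV" "\<forall>j<k. layer j Y' \<in> set_pmf \<Lambda>" using Suc.IH[OF Y(3)] by auto
  have "layer j Y = (if j = k then X else layer j Y')" for j
    using Y(1) IH(1) by (auto simp: layer_def)
  then show ?case using Y IH by (auto simp: less_Suc_eq)
qed simp

lemma indep_elems_layered: "indep_elems \<Lambda> \<Longrightarrow> indep_elems (layered k \<Lambda>)"
proof (induction k)
  case 0 then show ?case by (auto intro: indep_elems_subsingleton)
next
  case (Suc k)
  have "indep_elems (map_pmf ((`) (Pair k)) \<Lambda>)"
    by (rule indep_elems_image[OF Suc.prems, of UNIV]) (auto simp: inj_on_def)
  then show ?case unfolding layered.simps
    by (rule indep_elems_union_pmf[OF _ Suc.IH[OF Suc.prems], where UA = "{k} \<times> UNIV" and UB = "{..<k} \<times> UNIV"])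
      (use set_pmf_layered in auto)
qed

definition switch_rel :: rel where
  "switch_rel = (0, 0)"

text \<open>With \<open>m\<close> layers, each a singleton with probability \<open>s T\<close>, and a switch of probability \<open>r\<close>,
  a world of probability \<open>p\<close> is output with probability \<open>(1 - r) p T (1 - (1 - s T)^m) / (s T)\<close>;
  \<open>m\<close> and \<open>r\<close> can be chosen to make the factor of \<open>p\<close> equal to \<open>1\<close>.\<close>

lemma exists_layers_and_switch:
  fixes s T :: real
  assumes s: "0 < s" "s < 1" and T: "0 < T" and sT: "s * T \<le> 1"
  obtains m r where "0 \<le> r" "r \<le> 1" "(1 - r) * T * (1 - (1 - s * T) ^ m) / (s * T) = 1"
proof -
  obtain m where m: "(1 - s * T) ^ m < 1 - s"
    using real_arch_pow_inv[of "1 - s" "1 - s * T"] s T by auto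
  define G where "G = (1 - (1 - s * T) ^ m) / s"
  have G: "1 < G" using m s by (simp add: G_def field_simps)
  show ?thesis
  proof (rule that[of "1 - 1 / G"])
    show "0 \<le> 1 - 1 / G" "1 - 1 / G \<le> 1" using G by (auto simp: field_simps)
    show "(1 - (1 - 1 / G)) * T * (1 - (1 - s * T) ^ m) / (s * T) = 1"
      using G s T by (simp add: G_def field_simps)
  qed
qed

locale layered_encoding = world_family S DD for S :: "rel set" and DD :: "'u inst set" +
  fixes \<nu> :: "nat \<Rightarrow> 'u" and P :: "'u inst pmf" and c :: nat
  assumes inj_\<nu>: "inj \<nu>" and set_pmf_P: "set_pmf P = DD"
    and card_le: "\<And>D. D \<in> DD \<Longrightarrow> card D \<le> c"
begin

definition slot_width :: nat where
  "slot_width = Suc max_arity"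

definition code_length :: nat where
  "code_length = c * slot_width"

definition layer_rel :: "nat \<Rightarrow> rel" where
  "layer_rel k = (Suc k, code_length)"

lemma layer_rel_inj: "layer_rel k = layer_rel k' \<Longrightarrow> k = k'"
  by (simp add: layer_rel_def)

lemma layer_rel_neq_switch_rel: "layer_rel k \<noteq> switch_rel"
  by (simp add: layer_rel_def switch_rel_def)

definition pad :: 'u where
  "pad = \<nu> 0"

definition rel_tag :: "rel \<Rightarrow> 'u" where
  "rel_tag R = \<nu> (Suc (prod_encode R))"

definition slot_entry :: "'u inst \<Rightarrow> nat \<Rightarrow> nat \<Rightarrow> 'u" where
  "slot_entry D j i = (if j < length (list_of D) then
      (if i = 0 then rel_tag (fst (list_of D ! j))
       else if i - 1 < length (snd (list_of D ! j)) then snd (list_of D ! j) ! (i - 1) else pad)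
     else pad)"

definition encode :: "'u inst \<Rightarrow> 'u list" where
  "encode D = map (\<lambda>p. slot_entry D (p div slot_width) (p mod slot_width)) [0..<code_length]"

definition slot_match :: "'u list \<Rightarrow> rel \<Rightarrow> 'u list \<Rightarrow> bool" where
  "slot_match vs R as \<longleftrightarrow>
     (\<exists>j<c. vs ! (j * slot_width) = rel_tag R \<and> (\<forall>a<arity R. as ! a = vs ! (j * slot_width + Suc a)))"

definition world_odds :: "nat \<Rightarrow> real" where
  "world_odds n = (if n \<in> ids then pmf P (world n) else 0)"

lemma length_encode [simp]: "length (encode D) = code_length"
  by (simp add: encode_def)

lemma slot_index_less: "j < c \<Longrightarrow> i < slot_width \<Longrightarrow> j * slot_width + i < code_length"
proof -
  assume "j < c" "i < slot_width"
  then have "j * slot_width + i < Suc j * slot_width" by simp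
  also have "\<dots> \<le> c * slot_width" using \<open>j < c\<close> by (intro mult_right_mono) auto
  finally show ?thesis by (simp add: code_length_def)
qed

lemma encode_nth: "j < c \<Longrightarrow> i < slot_width \<Longrightarrow> encode D ! (j * slot_width + i) = slot_entry D j i"
proof -
  assume j: "j < c" and i: "i < slot_width"
  then have "(j * slot_width + i) div slot_width = j" "(j * slot_width + i) mod slot_width = i" by simp_all
  then show ?thesis using slot_index_less[OF j i] by (simp add: encode_def)
qed

lemma rel_tag_inj: "rel_tag R = rel_tag R' \<Longrightarrow> R = R'"
  using inj_\<nu> by (auto simp: rel_tag_def dest: injD)

lemma rel_tag_neq_pad: "rel_tag R \<noteq> pad"
  using inj_\<nu> by (auto simp: rel_tag_def pad_def dest: injD)

lemma slot_match_encodeD: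
  assumes D: "D \<in> DD" and R: "R \<in> S" and len: "length as = arity R"
    and match: "slot_match (encode D) R as"
  shows "(R, as) \<in> D"
proof -
  have fin: "finite D" using DD_instances[OF D] by (simp add: instance_over_def)
  obtain j where j: "j < c" "encode D ! (j * slot_width) = rel_tag R"
    "\<forall>a<arity R. as ! a = encode D ! (j * slot_width + Suc a)"
    using match by (auto simp: slot_match_def)
  have tag: "encode D ! (j * slot_width) = slot_entry D j 0"
    using encode_nth[OF j(1), of 0] by (simp add: slot_width_def)
  have jl: "j < length (list_of D)"
  proof (rule ccontr)
    assume "\<not> j < length (list_of D)"
    then have "slot_entry D j 0 = pad" by (simp add: slot_entry_def)
    then show False using j(2) tag rel_tag_neq_pad by metis
  qed
  obtain R' as' where f: "list_of D ! j = (R', as')" by fastforce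
  have fD: "(R', as') \<in> D" using f jl list_of[OF fin] by (metis nth_mem)
  have "R' = R" using j(2) tag jl f rel_tag_inj by (simp add: slot_entry_def)
  moreover have len': "length as' = arity R"
    using DD_instances[OF D] fD calculation by (auto simp: instance_over_def)
  moreover have "as = as'"
  proof (rule nth_equalityI)
    show "length as = length as'" using len len' by simp
    fix a assume "a < length as"
    then have a: "a < arity R" using len by simp
    have arg: "Suc a < slot_width" using a arity_le_max_arity[OF R] by (simp add: slot_width_def)
    have "as ! a = slot_entry D j (Suc a)" using j(3) a encode_nth[OF j(1) arg] by simp
    then show "as ! a = as' ! a" using jl f a len' by (simp add: slot_entry_def)
  qed
  ultimately show "(R, as) \<in> D" using fD by simp
qed

lemma slot_match_encodeI:
  assumes D: "D \<in> DD" and R: "R \<in> S" and len: "length as = arity R" and RD: "(R, as) \<in> D"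
  shows "slot_match (encode D) R as"
proof -
  have fin: "finite D" using DD_instances[OF D] by (simp add: instance_over_def)
  obtain j where j: "j < length (list_of D)" "list_of D ! j = (R, as)"
    using RD list_of[OF fin] by (metis in_set_conv_nth)
  then have jc: "j < c" using length_list_of[OF fin] card_le[OF D] by simp
  have tag: "encode D ! (j * slot_width) = rel_tag R"
    using encode_nth[OF jc, of 0] j by (simp add: slot_entry_def slot_width_def)
  have "as ! a = encode D ! (j * slot_width + Suc a)" if "a < arity R" for a
  proof -
    have arg: "Suc a < slot_width" using that arity_le_max_arity[OF R] by (simp add: slot_width_def)
    show ?thesis using encode_nth[OF jc arg] j that len by (simp add: slot_entry_def)
  qed
  then show ?thesis unfolding slot_match_def using jc tag by blast
qed

lemma slot_match_encode:
  "D \<in> DD \<Longrightarrow> R \<in> S \<Longrightarrow> length as = arity R \<Longrightarrow> slot_match (encode D) R as \<longleftrightarrow> (R, as) \<in> D"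
  using slot_match_encodeD slot_match_encodeI by blast

lemma encode_inj:
  assumes D: "D \<in> DD" and D': "D' \<in> DD" and eq: "encode D = encode D'"
  shows "D = D'"
proof (rule set_eqI)
  fix f :: "'u fact"
  obtain R as where f: "f = (R, as)" by fastforce
  have "f \<in> D \<union> D' \<Longrightarrow> R \<in> S \<and> length as = arity R"
    using DD_instances[OF D] DD_instances[OF D'] f by (auto simp: instance_over_def)
  then show "f \<in> D \<longleftrightarrow> f \<in> D'"
    using slot_match_encode[OF D, of R as] slot_match_encode[OF D', of R as] eq f by auto
qed

lemma inj_on_encode_world: "inj_on (\<lambda>n. encode (world n)) ids"
proof (rule inj_onI)
  fix n n' assume "n \<in> ids" "n' \<in> ids" "encode (world n) = encode (world n')"
  then show "n = n'" using encode_inj[OF world_in world_in] world_inj by blast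
qed

lemma world_odds_pos: "0 < world_odds n \<longleftrightarrow> n \<in> ids"
  using world_in set_pmf_P by (auto simp: world_odds_def pmf_positive)

lemma sum_world_odds_le: "finite F \<Longrightarrow> sum world_odds F \<le> 1 - pmf P default_world"
proof -
  assume fin: "finite F"
  have "sum world_odds F = sum world_odds (F \<inter> ids)"
    by (rule sum.mono_neutral_right) (use fin in \<open>auto simp: world_odds_def\<close>)
  also have "\<dots> = sum (pmf P) (world ` (F \<inter> ids))"
    using world_inj by (subst sum.reindex) (auto intro: inj_onI simp: world_odds_def)
  also have "\<dots> = measure_pmf.prob P (world ` (F \<inter> ids))"
    using fin by (simp add: measure_measure_pmf_finite)
  also have "\<dots> \<le> measure_pmf.prob P (UNIV - {default_world})"
    using world_coded by (intro measure_pmf.finite_measure_mono) (auto simp: coded_def)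
  also have "\<dots> = 1 - pmf P default_world"
    using measure_pmf.prob_compl[of "{default_world}" P] by (simp add: measure_pmf_single)
  finally show ?thesis .
qed

sublocale summable_odds world_odds
proof
  show "0 \<le> world_odds n" for n by (simp add: world_odds_def)
  show "summable world_odds"
    by (rule summableI_nonneg_bounded[of _ "1 - pmf P default_world"])
      (simp_all add: sum_world_odds_le, simp add: world_odds_def)
qed

lemma suminf_world_odds: "0 \<le> suminf world_odds" "suminf world_odds < 1"
proof -
  show "0 \<le> suminf world_odds" by (intro suminf_nonneg odds_summable odds_nonneg)
  have "suminf world_odds \<le> 1 - pmf P default_world"
    by (rule suminf_le_const[OF odds_summable sum_world_odds_le]) simp
  moreover have "0 < pmf P default_world" using default_world_in set_pmf_P by (simp add: pmf_positive)
  ultimately show "suminf world_odds < 1" by linarith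
qed

definition var2 :: nat where
  "var2 = max_arity + code_length"

definition layer_atom :: "nat \<Rightarrow> nat \<Rightarrow> 'u fo" where
  "layer_atom k v = Atom (layer_rel k) (Vars v code_length)"

definition Eqs :: "nat \<Rightarrow> nat \<Rightarrow> nat \<Rightarrow> 'u fo" where
  "Eqs v w n = Conjs (map (\<lambda>i. FEq (Var (v + i)) (Var (w + i))) [0..<n])"

definition Single_fm :: "nat \<Rightarrow> 'u fo" where
  "Single_fm k = Exs max_arity code_length (Conj (layer_atom k max_arity)
     (Alls var2 code_length (Impl (layer_atom k var2) (Eqs var2 max_arity code_length))))"

definition Match_fm :: "rel \<Rightarrow> 'u fo" where
  "Match_fm R = Disjs (map (\<lambda>j. Conj (FEq (Var (max_arity + j * slot_width)) (Const (rel_tag R)))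
     (Conjs (map (\<lambda>a. FEq (Var a) (Var (max_arity + j * slot_width + Suc a))) [0..<arity R]))) [0..<c])"

definition Decode_layer_fm :: "nat \<Rightarrow> rel \<Rightarrow> 'u fo" where
  "Decode_layer_fm k R = Exs max_arity code_length (Conj (layer_atom k max_arity) (Match_fm R))"

primrec Select_fm :: "nat \<Rightarrow> rel \<Rightarrow> 'u fo" where
  "Select_fm 0 R = in_inst default_world R"
| "Select_fm (Suc k) R = Disj (Conj (Single_fm k) (Decode_layer_fm k R)) (Conj (Neg (Single_fm k)) (Select_fm k R))"

definition Switch_fm :: "'u fo" where
  "Switch_fm = Atom switch_rel []"

definition layered_view :: "nat \<Rightarrow> rel \<Rightarrow> 'u fo" where
  "layered_view m R = Disj (Conj Switch_fm (in_inst default_world R)) (Conj (Neg Switch_fm) (Select_fm m R))"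

definition layered_schema :: "nat \<Rightarrow> rel set" where
  "layered_schema m = insert switch_rel (layer_rel ` {..<m})"

primrec select :: "nat \<Rightarrow> (nat \<times> nat) set \<Rightarrow> 'u inst" where
  "select 0 U = default_world"
| "select (Suc k) U = (if is_singleton (layer k U) then world (the_elem (layer k U)) else select k U)"

definition layered_output :: "nat \<Rightarrow> (nat \<times> nat) set \<Rightarrow> 'u inst" where
  "layered_output m U = (if (m, 0) \<in> U then default_world else select m U)"

text \<open>Codes \<open>(k, n)\<close> with \<open>k < m\<close> stand for ``world \<open>n\<close> in layer \<open>k\<close>'', and \<open>(m, 0)\<close> for the switch.\<close>

definition code_fact :: "nat \<Rightarrow> nat \<times> nat \<Rightarrow> 'u fact" where
  "code_fact m kn = (if fst kn < m then (layer_rel (fst kn), encode (world (snd kn))) else (switch_rel, []))"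

definition good_codes :: "nat \<Rightarrow> (nat \<times> nat) set \<Rightarrow> bool" where
  "good_codes m U \<longleftrightarrow> finite U \<and> U \<subseteq> ({..<m} \<times> ids) \<union> {(m, 0)}"

lemma sat_Eqs:
  assumes "length vs = code_length" "length ws = code_length"
  shows "sat X A (upd_block (upd_block \<sigma> max_arity vs) var2 ws) (Eqs var2 max_arity code_length) \<longleftrightarrow> ws = vs"
proof -
  have "upd_block (upd_block \<sigma> max_arity vs) var2 ws (max_arity + i) = vs ! i" if "i < code_length" for i
    using that assms by (simp add: var2_def upd_block_below upd_block_nth)
  moreover have "upd_block (upd_block \<sigma> max_arity vs) var2 ws (var2 + i) = ws ! i" if "i < code_length" for i
    using that assms by (simp add: upd_block_nth)
  ultimately show ?thesis using assms by (auto simp: Eqs_def sat_Conjs intro: nth_equalityI)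
qed

lemma sat_Single_fm:
  assumes A: "adom X \<subseteq> A" and len: "\<And>ws. (layer_rel k, ws) \<in> X \<Longrightarrow> length ws = code_length"
  shows "sat X A \<sigma> (Single_fm k) \<longleftrightarrow> is_singleton {ws. (layer_rel k, ws) \<in> X}"
proof -
  have "sat X A \<sigma> (Single_fm k) \<longleftrightarrow> (\<exists>vs. (layer_rel k, vs) \<in> X \<and> length vs = code_length \<and>
      (\<forall>ws. (layer_rel k, ws) \<in> X \<longrightarrow> length ws = code_length \<longrightarrow> ws = vs))"
    by (simp add: Single_fm_def layer_atom_def sat_Exs_Conj_Atom[OF A] sat_Alls_Impl_Atom[OF A] sat_Eqs
        cong: conj_cong)
  also have "\<dots> \<longleftrightarrow> is_singleton {ws. (layer_rel k, ws) \<in> X}"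
    using len by (auto simp: is_singleton_def)
  finally show ?thesis .
qed

lemma sat_Match_fm:
  assumes R: "R \<in> S" and len: "length as = arity R" and lv: "length vs = code_length"
  shows "sat X A (upd_block (\<lambda>i. as ! i) max_arity vs) (Match_fm R) \<longleftrightarrow> slot_match vs R as"
proof -
  let ?\<sigma> = "upd_block (\<lambda>i. as ! i) max_arity vs"
  have arg: "Suc a < slot_width" if "a < arity R" for a
    using that arity_le_max_arity[OF R] by (simp add: slot_width_def)
  have tag: "?\<sigma> (max_arity + j * slot_width) = vs ! (j * slot_width)" if "j < c" for j
    using upd_block_nth[of "j * slot_width" vs] slot_index_less[OF that, of 0] lv
    by (simp add: slot_width_def)
  have out: "?\<sigma> a = as ! a" if "a < arity R" for a
    using that arity_le_max_arity[OF R] by (intro upd_block_below) simp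
  have entry: "?\<sigma> (max_arity + j * slot_width + Suc a) = vs ! (j * slot_width + Suc a)"
    if "j < c" "a < arity R" for j a
    using upd_block_nth[of "j * slot_width + Suc a" vs] slot_index_less[OF that(1) arg[OF that(2)]] lv
    by (simp add: add.assoc)
  show ?thesis
    unfolding Match_fm_def slot_match_def sat_Disjs
    by (auto simp: sat_Conjs tag out entry simp del: add_Suc_right)
qed

lemma sat_Decode_layer_fm:
  assumes A: "adom X \<subseteq> A" and R: "R \<in> S" and len: "length as = arity R"
    and lenX: "\<And>ws. (layer_rel k, ws) \<in> X \<Longrightarrow> length ws = code_length"
  shows "sat X A (\<lambda>i. as ! i) (Decode_layer_fm k R) \<longleftrightarrow> (\<exists>vs. (layer_rel k, vs) \<in> X \<and> slot_match vs R as)"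
  using lenX by (auto simp: Decode_layer_fm_def layer_atom_def sat_Exs_Conj_Atom[OF A] sat_Match_fm[OF R len])

lemma code_fact_layer_iff:
  assumes "good_codes m U"
  shows "(layer_rel k, ws) \<in> code_fact m ` U \<longleftrightarrow> k < m \<and> (\<exists>n\<in>layer k U. ws = encode (world n))"
proof
  assume "(layer_rel k, ws) \<in> code_fact m ` U"
  then obtain k' n where "(k', n) \<in> U" "(layer_rel k, ws) = code_fact m (k', n)" by auto
  then show "k < m \<and> (\<exists>n\<in>layer k U. ws = encode (world n))"
    using layer_rel_inj layer_rel_neq_switch_rel
    by (auto simp: code_fact_def layer_def split: if_splits)
next
  assume "k < m \<and> (\<exists>n\<in>layer k U. ws = encode (world n))"
  then obtain n where "k < m" "(k, n) \<in> U" "ws = encode (world n)" by (auto simp: layer_def)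
  then show "(layer_rel k, ws) \<in> code_fact m ` U" by (force simp: code_fact_def)
qed

lemma code_fact_switch_iff:
  assumes "good_codes m U"
  shows "(switch_rel, []) \<in> code_fact m ` U \<longleftrightarrow> (m, 0) \<in> U"
proof
  assume "(switch_rel, []) \<in> code_fact m ` U"
  then obtain k n where kn: "(k, n) \<in> U" "(switch_rel, []) = code_fact m (k, n)" by auto
  then have "\<not> k < m" using layer_rel_neq_switch_rel by (metis code_fact_def fst_conv prod.inject)
  then show "(m, 0) \<in> U" using kn(1) assms by (auto simp: good_codes_def)
next
  assume "(m, 0) \<in> U"
  then show "(switch_rel, []) \<in> code_fact m ` U" by (force simp: code_fact_def)
qed

lemma layer_subset_ids: "good_codes m U \<Longrightarrow> k < m \<Longrightarrow> layer k U \<subseteq> ids"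
  by (auto simp: good_codes_def layer_def)

context
  fixes m U and A :: "'u set"
  assumes good: "good_codes m U" and A: "adom (code_fact m ` U) \<subseteq> A"
begin

lemma code_fact_length: "(layer_rel k, ws) \<in> code_fact m ` U \<Longrightarrow> length ws = code_length"
  using code_fact_layer_iff[OF good] by auto

lemma sat_Single_fm_layer:
  assumes k: "k < m"
  shows "sat (code_fact m ` U) A \<sigma> (Single_fm k) \<longleftrightarrow> is_singleton (layer k U)"
proof -
  have "{ws. (layer_rel k, ws) \<in> code_fact m ` U} = (\<lambda>n. encode (world n)) ` layer k U"
    using code_fact_layer_iff[OF good] k by auto
  moreover have "inj_on (\<lambda>n. encode (world n)) (layer k U)"
    using inj_on_subset[OF inj_on_encode_world layer_subset_ids[OF good k]] .
  ultimately show ?thesis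
    using sat_Single_fm[OF A code_fact_length] by (simp add: is_singleton_altdef card_image)
qed

lemma sat_Decode_layer_fm_layer:
  assumes k: "k < m" and n: "layer k U = {n}" and R: "R \<in> S" and len: "length as = arity R"
  shows "sat (code_fact m ` U) A (\<lambda>i. as ! i) (Decode_layer_fm k R) \<longleftrightarrow> (R, as) \<in> world n"
proof -
  have "n \<in> ids" using layer_subset_ids[OF good k] n by auto
  moreover have "(layer_rel k, vs) \<in> code_fact m ` U \<longleftrightarrow> vs = encode (world n)" for vs
    using code_fact_layer_iff[OF good] k n by auto
  ultimately show ?thesis
    using sat_Decode_layer_fm[OF A R len code_fact_length] slot_match_encode[OF world_in R len] by simp
qed

lemma sat_Select_fm:
  assumes R: "R \<in> S" and len: "length as = arity R"
  shows "k \<le> m \<Longrightarrow> sat (code_fact m ` U) A (\<lambda>i. as ! i) (Select_fm k R) \<longleftrightarrow> (R, as) \<in> select k U"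
proof (induction k)
  case 0
  then show ?case using sat_in_inst[OF default_world_instance len] by simp
next
  case (Suc k)
  then have k: "k < m" by simp
  show ?case
  proof (cases "is_singleton (layer k U)")
    case True
    then obtain n where "layer k U = {n}" by (auto elim: is_singletonE)
    then show ?thesis
      using sat_Single_fm_layer[OF k] sat_Decode_layer_fm_layer[OF k _ R len] True by simp
  next
    case False
    then show ?thesis using sat_Single_fm_layer[OF k] Suc by simp
  qed
qed

end

lemma select_cases: "select k U = default_world \<or> (\<exists>j<k. \<exists>n. layer j U = {n} \<and> select k U = world n)"
proof (induction k)
  case (Suc k)
  show ?case
  proof (cases "is_singleton (layer k U)")
    case True
    then obtain n where "layer k U = {n}" by (rule is_singletonE)
    then show ?thesis by auto
  next
    case False
    then show ?thesis using Suc less_Suc_eq by auto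
  qed
qed simp

lemma layered_output_fact_range:
  assumes good: "good_codes m U" and out: "(R, as) \<in> layered_output m U"
  shows "R \<in> S \<and> length as = arity R \<and> set as \<subseteq> adom (code_fact m ` U) \<union> fo_consts (layered_view m R)"
proof (cases "layered_output m U = default_world")
  case True
  then have D: "(R, as) \<in> default_world" using out by simp
  then have "set as \<subseteq> fo_consts (layered_view m R)"
    using fo_consts_in_inst[OF default_world_instance D] by (auto simp: layered_view_def)
  then show ?thesis using D default_world_instance by (auto simp: instance_over_def)
next
  case False
  then obtain j n where jn: "j < m" "layer j U = {n}" "layered_output m U = world n"
    using select_cases[of m U] by (auto simp: layered_output_def split: if_splits)
  have n: "n \<in> ids" using layer_subset_ids[OF good jn(1)] jn(2) by auto
  have w: "(R, as) \<in> world n" using out jn(3) by simp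
  then have RS: "R \<in> S" "length as = arity R" using world_instance[OF n] by (auto simp: instance_over_def)
  have "(layer_rel j, encode (world n)) \<in> code_fact m ` U"
    using code_fact_layer_iff[OF good] jn(1,2) by auto
  then have "set (encode (world n)) \<subseteq> adom (code_fact m ` U)" by (rule set_subset_adom)
  moreover have "set as \<subseteq> set (encode (world n))"
  proof
    fix x assume "x \<in> set as"
    then obtain a where a: "a < arity R" "as ! a = x" using RS by (auto simp: in_set_conv_nth)
    obtain j' where j': "j' < c" "as ! a = encode (world n) ! (j' * slot_width + Suc a)"
      using slot_match_encode[OF world_in[OF n] RS] w a(1) by (auto simp: slot_match_def)
    have "Suc a < slot_width" using arity_le_max_arity[OF RS(1)] a(1) by (simp add: slot_width_def)
    then show "x \<in> set (encode (world n))"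
      using j' a(2) slot_index_less[OF j'(1)] by (metis length_encode nth_mem)
  qed
  ultimately show ?thesis using RS by blast
qed

lemma view_apply_layered_view:
  assumes good: "good_codes m U"
  shows "view_apply S (layered_view m) (code_fact m ` U) = layered_output m U"
proof (rule view_apply_eqI)
  let ?X = "code_fact m ` U"
  fix R :: rel and as :: "'u list" assume R: "R \<in> S" and len: "length as = arity R"
  define A where "A = adom ?X \<union> fo_consts (layered_view m R)"
  have A: "adom ?X \<subseteq> A" by (simp add: A_def)
  have "sat_adom ?X (layered_view m R) as \<longleftrightarrow> sat ?X A (\<lambda>i. as ! i) (layered_view m R)"
    by (simp add: sat_adom_def A_def)
  also have "\<dots> \<longleftrightarrow> (m, 0) \<in> U \<and> (R, as) \<in> default_world \<or> (m, 0) \<notin> U \<and> (R, as) \<in> select m U"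
    unfolding layered_view_def sat.simps Switch_fm_def sat_in_inst[OF default_world_instance len]
      sat_Select_fm[OF good A R len le_refl]
    using code_fact_switch_iff[OF good] by simp
  also have "\<dots> \<longleftrightarrow> (R, as) \<in> layered_output m U" by (simp add: layered_output_def)
  finally show "sat_adom ?X (layered_view m R) as \<longleftrightarrow> (R, as) \<in> layered_output m U" .
qed (rule layered_output_fact_range[OF good])

lemma fo_view_layered_view: "fo_view (layered_schema m) S (layered_view m)"
  unfolding fo_view_def
proof (intro conjI ballI)
  show "schema (layered_schema m)" by (simp add: schema_def layered_schema_def)
  show "schema S" by (rule schema)
  fix R assume R: "R \<in> S"
  have "fv (Single_fm k) = {}" for k
    by (auto simp: Single_fm_def fv_Exs fv_Alls layer_atom_def Eqs_def fv_Conjs Vars_def var2_def)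
  moreover have "fv (Decode_layer_fm k R) \<subseteq> {..<arity R}" for k
  proof -
    have "fv (Match_fm R) \<subseteq> {..<arity R} \<union> {max_arity..<max_arity + code_length}"
    proof
      fix x assume "x \<in> fv (Match_fm R)"
      then obtain j where j: "j < c"
        and x: "x \<in> fv (Conj (FEq (Var (max_arity + j * slot_width)) (Const (rel_tag R)))
          (Conjs (map (\<lambda>a. FEq (Var a) (Var (max_arity + j * slot_width + Suc a))) [0..<arity R])))"
        unfolding Match_fm_def fv_Disjs by auto
      have "j * slot_width + Suc a < code_length" if "a < arity R" for a
        using that arity_le_max_arity[OF R] slot_index_less[OF j, of "Suc a"] by (simp add: slot_width_def)
      moreover have "j * slot_width < code_length" using slot_index_less[OF j, of 0] by (simp add: slot_width_def)
      ultimately show "x \<in> {..<arity R} \<union> {max_arity..<max_arity + code_length}"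
        using x by (auto simp: fv_Conjs)
    qed
    then show ?thesis
      by (auto simp: Decode_layer_fm_def fv_Exs layer_atom_def Vars_def)
  qed
  ultimately have "fv (Select_fm k R) \<subseteq> {..<arity R}" for k
    by (induction k) (use fv_in_inst[OF default_world_instance] in auto)
  then show "fv (layered_view m R) \<subseteq> {..<arity R}"
    using fv_in_inst[OF default_world_instance, of R] by (auto simp: layered_view_def Switch_fm_def)
  have "rels (Select_fm k R) \<subseteq> layer_rel ` {..<k}" for k
    by (induction k) (auto simp: rels_in_inst Single_fm_def Decode_layer_fm_def rels_Exs rels_Alls
        layer_atom_def Eqs_def Match_fm_def rels_Conjs rels_Disjs)
  then show "rels (layered_view m R) \<subseteq> layered_schema m"
    by (auto simp: layered_view_def Switch_fm_def rels_in_inst layered_schema_def)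
qed

lemma select_cong: "(\<And>j. j < k \<Longrightarrow> layer j U = layer j U') \<Longrightarrow> select k U = select k U'"
  by (induction k) auto

lemma select_Suc_union:
  assumes "Y \<subseteq> {..<k} \<times> UNIV"
  shows "select (Suc k) (Pair k ` X \<union> Y) = (if is_singleton X then world (the_elem X) else select k Y)"
proof -
  have "layer k (Pair k ` X \<union> Y) = X" using assms by (auto simp: layer_def)
  moreover have "select k (Pair k ` X \<union> Y) = select k Y"
    by (rule select_cong) (auto simp: layer_def)
  ultimately show ?thesis by simp
qed

lemma set_pmf_odds_set_world:
  assumes "X \<in> set_pmf (odds_set world_odds)"
  shows "finite X" "X \<subseteq> ids"
  using set_pmf_odds_set[OF assms] world_odds_pos by auto

lemma set_pmf_layered_world:
  assumes "Y \<in> set_pmf (layered m (odds_set world_odds))"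
  shows "finite Y" "Y \<subseteq> {..<m} \<times> ids"
proof -
  have sub: "Y \<subseteq> (\<Union>j<m. {j} \<times> layer j Y)" using set_pmf_layered[OF assms] by (auto simp: layer_def)
  have "layer j Y \<in> set_pmf (odds_set world_odds)" if "j < m" for j
    using set_pmf_layered[OF assms] that by blast
  then have fin: "finite (layer j Y)" and ids: "layer j Y \<subseteq> ids" if "j < m" for j
    using set_pmf_odds_set_world that by blast+
  have "finite (\<Union>j<m. {j} \<times> layer j Y)" by (intro finite_UN_I) (simp_all add: fin)
  then show "finite Y" using sub by (rule finite_subset[rotated])
  show "Y \<subseteq> {..<m} \<times> ids"
  proof
    fix y assume "y \<in> Y"
    then obtain j n where "y = (j, n)" "j < m" "n \<in> layer j Y" using sub by blast
    then show "y \<in> {..<m} \<times> ids" using ids by auto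
  qed
qed

definition switch_pmf :: "real \<Rightarrow> nat \<Rightarrow> (nat \<times> nat) set pmf" where
  "switch_pmf r m = map_pmf (\<lambda>b. if b then {(m, 0)} else {}) (bernoulli_pmf r)"

definition input_codes :: "real \<Rightarrow> nat \<Rightarrow> (nat \<times> nat) set pmf" where
  "input_codes r m = union_pmf (switch_pmf r m) (layered m (odds_set world_odds))"

lemma set_pmf_switch_pmf: "X \<in> set_pmf (switch_pmf r m) \<Longrightarrow> X \<subseteq> {(m, 0)}"
  by (auto simp: switch_pmf_def)

lemma good_codes_input_codes:
  assumes "U \<in> set_pmf (input_codes r m)"
  shows "good_codes m U"
proof -
  obtain X Y where U: "U = X \<union> Y" and X: "X \<subseteq> {(m, 0)}"
    and Y: "Y \<in> set_pmf (layered m (odds_set world_odds))"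
    using assms set_pmf_switch_pmf by (auto simp: input_codes_def set_pmf_union_pmf)
  have "finite X" using X finite_subset by blast
  then show ?thesis using U X set_pmf_layered_world[OF Y] by (auto simp: good_codes_def)
qed

lemma indep_elems_input_codes: "indep_elems (input_codes r m)"
  unfolding input_codes_def
proof (rule indep_elems_union_pmf[where UA = "{(m, 0)}" and UB = "{..<m} \<times> UNIV"])
  show "indep_elems (switch_pmf r m)" by (rule indep_elems_subsingleton[OF set_pmf_switch_pmf])
  show "indep_elems (layered m (odds_set world_odds))" by (rule indep_elems_layered[OF indep_elems_odds_set])
qed (use set_pmf_switch_pmf set_pmf_layered in auto)

lemma inj_on_code_fact: "inj_on (code_fact m) (({..<m} \<times> ids) \<union> {(m, 0)})"
proof (rule inj_onI)
  fix x y assume x: "x \<in> ({..<m} \<times> ids) \<union> {(m, 0)}" and y: "y \<in> ({..<m} \<times> ids) \<union> {(m, 0)}"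
    and eq: "code_fact m x = code_fact m y"
  show "x = y"
  proof (cases "fst x < m \<and> fst y < m")
    case True
    then have "fst x = fst y" "encode (world (snd x)) = encode (world (snd y))"
      using eq layer_rel_inj by (auto simp: code_fact_def)
    moreover have "snd x = snd y"
      using calculation(2) inj_on_encode_world x y True by (auto dest: inj_onD)
    ultimately show ?thesis by (simp add: prod_eq_iff)
  next
    case False
    then show ?thesis
      using x y eq
      by (auto simp: code_fact_def layer_rel_neq_switch_rel layer_rel_neq_switch_rel[symmetric] split: if_splits)
  qed
qed

lemma pdb_input_codes: "pdb (layered_schema m) (map_pmf ((`) (code_fact m)) (input_codes r m))"
  unfolding pdb_def
proof (intro conjI ballI)
  show "schema (layered_schema m)" by (simp add: schema_def layered_schema_def)
  fix X assume "X \<in> set_pmf (map_pmf ((`) (code_fact m)) (input_codes r m))"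
  then obtain U where U: "good_codes m U" "X = code_fact m ` U"
    using good_codes_input_codes by auto
  show "instance_over (layered_schema m) X"
    using U by (auto simp: instance_over_def good_codes_def code_fact_def layered_schema_def arity_def
        layer_rel_def switch_rel_def)
qed

definition singleton_prob :: real where
  "singleton_prob = measure_pmf.prob (odds_set world_odds) {X. is_singleton X}"

definition singleton_world_prob :: "'u inst \<Rightarrow> real" where
  "singleton_world_prob D = measure_pmf.prob (odds_set world_odds) {X. is_singleton X \<and> world (the_elem X) = D}"

lemma singleton_prob_eq: "singleton_prob = suminf world_odds * odds_tail world_odds 0"
proof -
  have "disjoint_family (\<lambda>n. {{n}} :: nat set set)" by (auto simp: disjoint_family_on_def)
  then have "(\<lambda>n. measure_pmf.prob (odds_set world_odds) {{n}}) sums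
      measure_pmf.prob (odds_set world_odds) (\<Union>n. {{n}})"
    by (intro measure_pmf.finite_measure_UNION) auto
  moreover have "(\<Union>n. {{n}}) = {X :: nat set. is_singleton X}" by (auto simp: is_singleton_def)
  ultimately have "(\<lambda>n. world_odds n * odds_tail world_odds 0) sums singleton_prob"
    by (simp add: singleton_prob_def measure_pmf_single pmf_odds_set_singleton)
  then show ?thesis
    using sums_mult2[OF summable_sums[OF odds_summable]] sums_unique2 by blast
qed

lemma singleton_world_prob_eq:
  assumes D: "D \<noteq> default_world"
  shows "singleton_world_prob D = pmf P D * odds_tail world_odds 0"
proof (cases "D \<in> DD")
  case True
  then have "D \<in> coded" using D by (simp add: coded_def)
  then obtain i where i: "i \<in> ids" "world i = D" using world_surj by blast
  have "singleton_world_prob D = measure_pmf.prob (odds_set world_odds) {{i}}"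
    unfolding singleton_world_prob_def
  proof (rule measure_pmf_prob_cong)
    fix X assume "X \<in> set_pmf (odds_set world_odds)"
    then have "X \<subseteq> ids" by (rule set_pmf_odds_set_world)
    then show "X \<in> {X. is_singleton X \<and> world (the_elem X) = D} \<longleftrightarrow> X \<in> {{i}}"
      using i world_inj by (auto simp: is_singleton_def)
  qed
  also have "\<dots> = pmf P D * odds_tail world_odds 0"
    using i by (simp add: measure_pmf_single pmf_odds_set_singleton world_odds_def)
  finally show ?thesis .
next
  case False
  have "X \<notin> {X. is_singleton X \<and> world (the_elem X) = D}" if "X \<in> set_pmf (odds_set world_odds)" for X
    using set_pmf_odds_set_world(2)[OF that] world_in False by (auto simp: is_singleton_def)
  then have "singleton_world_prob D = 0"
    unfolding singleton_world_prob_def by (auto simp: measure_pmf_zero_iff)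
  moreover have "pmf P D = 0" using False set_pmf_P by (metis set_pmf_iff)
  ultimately show ?thesis by simp
qed

lemma prob_select_Suc:
  assumes D: "D \<noteq> default_world"
  shows "measure_pmf.prob (layered (Suc k) (odds_set world_odds)) {Y. select (Suc k) Y = D} =
    singleton_world_prob D + (1 - singleton_prob) * measure_pmf.prob (layered k (odds_set world_odds)) {Y. select k Y = D}"
proof -
  let ?\<Lambda> = "odds_set world_odds" and ?L = "layered k (odds_set world_odds)"
  define T1 where "T1 = {X. is_singleton X \<and> world (the_elem X) = D}"
  define T2 where "T2 = {X :: nat set. \<not> is_singleton X}"
  have "measure_pmf.prob (layered (Suc k) ?\<Lambda>) {Y. select (Suc k) Y = D} =
      measure_pmf.prob (pair_pmf ?\<Lambda> ?L) {(X, Y). select (Suc k) (Pair k ` X \<union> Y) = D}"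
    by (simp add: union_pmf_def pair_map_pmf1 map_pmf_comp vimage_def split_def del: select.simps)
  also have "\<dots> = measure_pmf.prob (pair_pmf ?\<Lambda> ?L)
      ({(X, Y). X \<in> T1 \<and> Y \<in> UNIV} \<union> {(X, Y). X \<in> T2 \<and> Y \<in> {Y. select k Y = D}})"
  proof (rule measure_pmf_prob_cong)
    fix z assume "z \<in> set_pmf (pair_pmf ?\<Lambda> ?L)"
    then obtain X Y where z: "z = (X, Y)" "Y \<in> set_pmf ?L" by auto
    then have "Y \<subseteq> {..<k} \<times> UNIV" using set_pmf_layered by blast
    then have "select (Suc k) (Pair k ` X \<union> Y) = (if is_singleton X then world (the_elem X) else select k Y)"
      by (rule select_Suc_union)
    then show "z \<in> {(X, Y). select (Suc k) (Pair k ` X \<union> Y) = D} \<longleftrightarrow>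
        z \<in> {(X, Y). X \<in> T1 \<and> Y \<in> UNIV} \<union> {(X, Y). X \<in> T2 \<and> Y \<in> {Y. select k Y = D}}"
      using z(1) by (auto simp: T1_def T2_def simp del: select.simps)
  qed
  also have "\<dots> = measure_pmf.prob (pair_pmf ?\<Lambda> ?L) {(X, Y). X \<in> T1 \<and> Y \<in> UNIV}
      + measure_pmf.prob (pair_pmf ?\<Lambda> ?L) {(X, Y). X \<in> T2 \<and> Y \<in> {Y. select k Y = D}}"
    by (rule measure_pmf.finite_measure_Union) (auto simp: T1_def T2_def)
  also have "\<dots> = measure_pmf.prob ?\<Lambda> T1 + measure_pmf.prob ?\<Lambda> T2 * measure_pmf.prob ?L {Y. select k Y = D}"
    unfolding prob_pair_pmf_Times by simp
  also have "measure_pmf.prob ?\<Lambda> T2 = 1 - singleton_prob"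
    using measure_pmf.prob_compl[of "{X. is_singleton X}" ?\<Lambda>]
    by (simp add: singleton_prob_def T2_def Compl_eq_Diff_UNIV[symmetric] Collect_neg_eq)
  finally show ?thesis by (simp add: singleton_world_prob_def T1_def)
qed

lemma prob_select:
  assumes D: "D \<noteq> default_world"
  shows "measure_pmf.prob (layered k (odds_set world_odds)) {Y. select k Y = D} * singleton_prob =
    singleton_world_prob D * (1 - (1 - singleton_prob) ^ k)"
proof (induction k)
  case 0 then show ?case using D by simp
next
  case (Suc k)
  let ?g = "measure_pmf.prob (layered k (odds_set world_odds)) {Y. select k Y = D}"
  have "measure_pmf.prob (layered (Suc k) (odds_set world_odds)) {Y. select (Suc k) Y = D} * singleton_prob =
      singleton_world_prob D * singleton_prob + (1 - singleton_prob) * (?g * singleton_prob)"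
    unfolding prob_select_Suc[OF D] by (simp add: algebra_simps)
  also have "\<dots> = singleton_world_prob D * (1 - (1 - singleton_prob) ^ Suc k)"
    unfolding Suc by (simp add: algebra_simps)
  finally show ?case .
qed

lemma pmf_layered_output:
  assumes D: "D \<noteq> default_world" and r: "0 \<le> r" "r \<le> 1"
  shows "pmf (map_pmf (layered_output m) (input_codes r m)) D =
    (1 - r) * measure_pmf.prob (layered m (odds_set world_odds)) {Y. select m Y = D}"
proof -
  let ?L = "layered m (odds_set world_odds)"
  have "pmf (map_pmf (layered_output m) (input_codes r m)) D =
      measure_pmf.prob (pair_pmf (switch_pmf r m) ?L) {(X, Y). layered_output m (X \<union> Y) = D}"
    by (simp add: pmf_map input_codes_def union_pmf_def vimage_def split_def)
  also have "\<dots> = measure_pmf.prob (pair_pmf (switch_pmf r m) ?L) {(X, Y). X \<in> {{}} \<and> Y \<in> {Y. select m Y = D}}"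
  proof (rule measure_pmf_prob_cong)
    fix z assume "z \<in> set_pmf (pair_pmf (switch_pmf r m) ?L)"
    then obtain X Y where z: "z = (X, Y)" "X \<in> set_pmf (switch_pmf r m)" "Y \<in> set_pmf ?L" by auto
    have X: "X \<subseteq> {(m, 0)}" using set_pmf_switch_pmf[OF z(2)] .
    have Y: "Y \<subseteq> {..<m} \<times> UNIV" using set_pmf_layered[OF z(3)] by blast
    have "select m (X \<union> Y) = select m Y" using X by (intro select_cong) (auto simp: layer_def)
    moreover have "(m, 0) \<in> X \<union> Y \<longleftrightarrow> X \<noteq> {}" using X Y by auto
    ultimately show "z \<in> {(X, Y). layered_output m (X \<union> Y) = D} \<longleftrightarrow>
        z \<in> {(X, Y). X \<in> {{}} \<and> Y \<in> {Y. select m Y = D}}"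
      using z(1) D by (auto simp: layered_output_def)
  qed
  also have "\<dots> = measure_pmf.prob (switch_pmf r m) {{}} * measure_pmf.prob ?L {Y. select m Y = D}"
    by (rule prob_pair_pmf_Times)
  also have "measure_pmf.prob (switch_pmf r m) {{}} = 1 - r"
  proof -
    have pre: "(\<lambda>b. if b then {(m, 0)} else {}) -` {{}} = {False}" by auto
    have "measure_pmf.prob (switch_pmf r m) {{}} = measure_pmf.prob (bernoulli_pmf r) {False}"
      unfolding switch_pmf_def measure_pmf_single pmf_map pre ..
    then show ?thesis using r by (simp add: measure_pmf_single pmf_bernoulli_False)
  qed
  finally show ?thesis .
qed

lemma exists_layered_output_eq: "\<exists>m r. map_pmf (layered_output m) (input_codes r m) = P"
proof (cases "suminf world_odds = 0")
  case True
  have "pmf P D = 0" if "D \<noteq> default_world" for D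
  proof (cases "D \<in> DD")
    case True
    then obtain i where i: "i \<in> ids" "world i = D"
      using world_surj \<open>D \<noteq> default_world\<close> by (auto simp: coded_def)
    then have "world_odds i \<le> 0"
      using \<open>suminf world_odds = 0\<close> sum_le_suminf[OF odds_summable, of "{i}"] odds_nonneg by simp
    then show ?thesis using i world_odds_pos[of i] by simp
  qed (metis set_pmf_P set_pmf_iff)
  moreover have "pmf (map_pmf (layered_output 0) (input_codes 0 0)) D = 0" if "D \<noteq> default_world" for D
    using pmf_layered_output[OF that, of 0 0] that by simp
  ultimately show ?thesis by (metis pmf_eqI_except)
next
  case False
  let ?s = "suminf world_odds" and ?T = "odds_tail world_odds 0"
  have s: "0 < ?s" "?s < 1" using False suminf_world_odds by auto
  have "singleton_prob \<le> 1" by (simp add: singleton_prob_def)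
  then have sT: "?s * ?T \<le> 1" by (simp add: singleton_prob_eq)
  obtain m r where r: "0 \<le> r" "r \<le> 1" and eq: "(1 - r) * ?T * (1 - (1 - ?s * ?T) ^ m) / (?s * ?T) = 1"
    using exists_layers_and_switch[OF s odds_tail_pos sT] by blast
  have "pmf (map_pmf (layered_output m) (input_codes r m)) D = pmf P D" if D: "D \<noteq> default_world" for D
  proof -
    have pos: "0 < ?s * ?T" using s odds_tail_pos by simp
    have "measure_pmf.prob (layered m (odds_set world_odds)) {Y. select m Y = D} =
        pmf P D * ?T * (1 - (1 - ?s * ?T) ^ m) / (?s * ?T)"
      using prob_select[OF D, of m] pos s(1) odds_tail_pos[of 0]
      by (simp add: singleton_prob_eq singleton_world_prob_eq[OF D] eq_divide_eq)
    then have "pmf (map_pmf (layered_output m) (input_codes r m)) D =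
        pmf P D * ((1 - r) * ?T * (1 - (1 - ?s * ?T) ^ m) / (?s * ?T))"
      using pmf_layered_output[OF D r] by (simp add: ac_simps)
    then show ?thesis using eq by simp
  qed
  then show ?thesis by (blast intro: pmf_eqI_except)
qed

theorem bounded_in_FO_TI: "in_FO_TI S P"
proof -
  obtain m r where P_eq: "map_pmf (layered_output m) (input_codes r m) = P"
    using exists_layered_output_eq by blast
  let ?I = "map_pmf ((`) (code_fact m)) (input_codes r m)"
  have "map_pmf (layered_output m) (input_codes r m) = map_pmf (view_apply S (layered_view m)) ?I"
    unfolding map_pmf_comp
    by (rule map_pmf_cong[OF refl]) (use good_codes_input_codes view_apply_layered_view in auto)
  then have "P = map_pmf (view_apply S (layered_view m)) ?I" using P_eq by simp
  moreover have "tuple_independent ?I"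
    unfolding tuple_independent_iff_indep_elems
    by (rule indep_elems_image[OF indep_elems_input_codes _ inj_on_code_fact])
      (use good_codes_input_codes in \<open>auto simp: good_codes_def\<close>)
  ultimately show ?thesis
    unfolding in_FO_TI_def using pdb_input_codes fo_view_layered_view by blast
qed

end

theorem theorem6p8:
  fixes DD :: "'u inst set" and S :: "rel set"
  assumes "countable (UNIV :: 'u set)" and "infinite (UNIV :: 'u set)"
    and "schema S"
    and "DD \<noteq> {}"
    and "\<forall>D \<in> DD. instance_over S D"
  shows "(bounded_instance_size DD \<longrightarrow>
            (\<forall>P :: 'u inst pmf. pdb S P \<and> worlds P = DD \<longrightarrow> in_FO_TI S P))
       \<and> (\<not> bounded_instance_size DD \<longrightarrow>
            (\<exists>P1 P2 :: 'u inst pmf. pdb S P1 \<and> pdb S P2 \<and> worlds P1 = DD \<and> worlds P2 = DD \<and>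
               in_FO_TI S P1 \<and> \<not> in_FO_TI S P2))"
proof -
  obtain \<nu> :: "nat \<Rightarrow> 'u" where \<nu>: "inj \<nu>" using infinite_countable_subset[OF assms(2)] by blast
  have "countable DD"
    by (rule countable_subset[OF _ countable_finite_instances[OF assms(1)]])
      (use assms(5) in \<open>auto simp: instance_over_def\<close>)
  then have family: "world_family S DD" using assms(3-5) by unfold_locales auto
  obtain P1 where P1: "pdb S P1" "worlds P1 = DD" "in_FO_TI S P1"
    using cycle_encoding.exists_FO_TI_with_worlds[of S DD \<nu>] family \<nu>
    by (auto simp: cycle_encoding_def cycle_encoding_axioms_def)
  show ?thesis
  proof (intro conjI impI allI)
    fix P :: "'u inst pmf" assume "bounded_instance_size DD" and P: "pdb S P \<and> worlds P = DD"
    then obtain c where "\<And>D. D \<in> DD \<Longrightarrow> card D \<le> c" by (auto simp: bounded_instance_size_def)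
    then show "in_FO_TI S P"
      using layered_encoding.bounded_in_FO_TI[of S DD \<nu> P c] family \<nu> P
      by (auto simp: layered_encoding_def layered_encoding_axioms_def worlds_def)
  next
    assume "\<not> bounded_instance_size DD"
    then obtain P2 where "set_pmf P2 = DD" "\<not> in_FO_TI S P2"
      using exists_not_FO_TI_with_support[of P1 S] P1(2) by (auto simp: worlds_def)
    then show "\<exists>P1 P2. pdb S P1 \<and> pdb S P2 \<and> worlds P1 = DD \<and> worlds P2 = DD \<and>
        in_FO_TI S P1 \<and> \<not> in_FO_TI S P2"
      using P1 assms(3,5) by (auto simp: pdb_def worlds_def)
  qed
qed

end
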